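(* Let $K=\mathbb{F}_2(t)$, let $\omega$ be a place of $K$ with $\omega\neq t,t^{-1}$, and for $y\in K_\omega$ let $C_y$ be the conic $x_0^2+x_0x_1+yx_1^2=tx_2^2$. For $k\in\mathbb{N}$, $k\ge1$, set \[\mathcal{A}_{0,k}=\{y\in K_\omega: v_\omega(y)=-k,\ C_y(K_\omega)\neq\emptyset\},\quad \mathcal{A}_{1,k}=\{y\in K_\omega: v_\omega(y)=-k,\ C_y(K_\omega)=\emptyset\}.\] Then for all $k>1$, \[\mu_\omega(\mathcal{A}_{0,k})=\mu_\omega(\mathcal{A}_{1,k})=\tfrac12\mu_\omega(\{y\in K_\omega: v_\omega(y)=-k\})=\tfrac12\cdot 2^{k\deg\omega}(1-2^{-\deg\omega}),\] and for $k=1$, $\mu_\omega(\mathcal{A}_{0,1})=2^{\deg\omega-1}-1$.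
   Context: $K_\omega$ is the completion of $K$ at $\omega$ with valuation $v_\omega$, ring of integers $\mathcal{O}_\omega$, and $\mu_\omega$ is the Haar measure on $K_\omega$ normalized so that $\mu_\omega(\mathcal{O}_\omega)=1$; $\deg\omega$ is the degree of $\omega$ as a monic irreducible polynomial in $\mathbb{F}_2[t]$. *)

theory Defs
  imports "HOL-Analysis.Analysis" "HOL-Probability.Probability"
    "HOL-Computational_Algebra.Polynomial_Factorial" "Berlekamp_Zassenhaus.Finite_Field"
begin

text \<open>Evaluation of a polynomial over F_2 = bit at an element T of a field of characteristic 2
  (the image of t under the embedding F_2(t) into the completion).\<close>
definition f2_eval :: "bool mod_ring poly \<Rightarrow> 'a::field \<Rightarrow> 'a" where
  "f2_eval p T = poly (map_poly (\<lambda>c. if c = 0 then 0 else 1) p) T"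

text \<open>(L, v, T) is the completion of K = F_2(t) at the finite place given by the monic
  irreducible polynomial w: L is a field of characteristic 2, v is a discrete valuation on
  L (its value at 0 is irrelevant), t maps to T, v restricted to F_2[t] is the normalized
  w-adic valuation, K is dense in L and L is complete with respect to v.\<close>
definition is_completion_at :: "bool mod_ring poly \<Rightarrow> 'a::field \<Rightarrow> ('a \<Rightarrow> int) \<Rightarrow> bool" where
  "is_completion_at w T v \<longleftrightarrow>
     (1::'a) + 1 = 0 \<and>
     (\<forall>x y. x \<noteq> 0 \<longrightarrow> y \<noteq> 0 \<longrightarrow> v (x * y) = v x + v y) \<and>
     (\<forall>x y. x \<noteq> 0 \<longrightarrow> y \<noteq> 0 \<longrightarrow> x + y \<noteq> 0 \<longrightarrow> v (x + y) \<ge> min (v x) (v y)) \<and>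
     (\<forall>p. p \<noteq> 0 \<longrightarrow> f2_eval p T \<noteq> 0 \<and> v (f2_eval p T) = int (multiplicity w p)) \<and>
     (\<forall>y (n::int). \<exists>p q. q \<noteq> 0 \<and>
        (y = f2_eval p T / f2_eval q T \<or> v (y - f2_eval p T / f2_eval q T) \<ge> n)) \<and>
     (\<forall>s::nat \<Rightarrow> 'a.
        (\<forall>n::int. \<exists>N. \<forall>i\<ge>N. \<forall>j\<ge>N. s i = s j \<or> v (s i - s j) \<ge> n) \<longrightarrow>
        (\<exists>l. \<forall>n::int. \<exists>N. \<forall>i\<ge>N. s i = l \<or> v (s i - l) \<ge> n))"

text \<open>Closed ball {y. v(y - c) >= n} (with v(0) = +infinity).\<close>
definition vball :: "('a::ab_group_add \<Rightarrow> int) \<Rightarrow> 'a \<Rightarrow> int \<Rightarrow> 'a set" where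
  "vball v c n = {y. y = c \<or> v (y - c) \<ge> n}"

definition is_haar :: "('a::ab_group_add \<Rightarrow> int) \<Rightarrow> 'a measure \<Rightarrow> bool" where
  "is_haar v mu \<longleftrightarrow>
     space mu = UNIV \<and>
     sets mu = sigma_sets UNIV (range (\<lambda>(c, n). vball v c n)) \<and>
     (\<forall>A \<in> sets mu. \<forall>c. (+) c ` A \<in> sets mu \<and> emeasure mu ((+) c ` A) = emeasure mu A) \<and>
     emeasure mu (vball v 0 0) = 1"

definition conic_has_point :: "'a::field \<Rightarrow> 'a \<Rightarrow> bool" where
  "conic_has_point T y \<longleftrightarrow>
     (\<exists>x0 x1 x2. (x0, x1, x2) \<noteq> (0, 0, 0) \<and> x0^2 + x0 * x1 + y * x1^2 = T * x2^2)"

end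

theory Submission
  imports Defs
begin

text \<open>
  Over \<open>K\<^sub>\<omega>\<close>, \<open>C\<^sub>y\<close> has a point iff \<open>y = T u\<^sup>2 + Y\<^sup>2 + Y\<close> for some \<open>u, Y\<close>, and in characteristic 2
  these \<open>y\<close> form an additive group \<open>G\<close>.  It contains the integers: the maximal ideal by Hensel's
  lemma for \<open>Y\<^sup>2 + Y\<close>, and the units because the residue field is perfect.  Subtracting suitable
  values \<open>T u\<^sup>2\<close> (at even levels) and \<open>T u\<^sup>2 + (s u)\<^sup>2 + s u\<close> with \<open>s\<^sup>2 \<equiv> T\<close> (at odd levels)
  pushes every \<open>y \<in> \<pp>\<^sup>-\<^sup>k\<close> into \<open>\<pp>\<^sup>-\<^sup>1\<close> modulo \<open>G\<close>.  On \<open>\<pp>\<^sup>-\<^sup>1/\<OO>\<close>, which is the residue field, \<open>G\<close>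
  becomes the image of an additive map with a kernel of order 2, because \<open>T\<close> is not a square
  modulo \<open>\<pp>\<^sup>2\<close>.  Hence \<open>G \<inter> \<pp>\<^sup>-\<^sup>k\<close> has index 2 in \<open>\<pp>\<^sup>-\<^sup>k\<close> for all \<open>k \<ge> 1\<close>, so by translation
  invariance it carries half the Haar measure \<open>2\<^sup>k\<^sup>d\<close> of \<open>\<pp>\<^sup>-\<^sup>k\<close>, while \<open>G \<inter> \<OO> = \<OO>\<close> has
  measure 1.  The shells \<open>v y = -k\<close> are differences of consecutive levels.
\<close>

section \<open>Discretely valued fields\<close>

locale nonarch_valued_field =
  fixes v :: "'a::field \<Rightarrow> int"
  assumes v_mult: "x \<noteq> 0 \<Longrightarrow> y \<noteq> 0 \<Longrightarrow> v (x * y) = v x + v y"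
    and v_ultra: "x \<noteq> 0 \<Longrightarrow> y \<noteq> 0 \<Longrightarrow> x + y \<noteq> 0 \<Longrightarrow> min (v x) (v y) \<le> v (x + y)"
begin

text \<open>The fractional ideal \<open>\<pp>\<^sup>n\<close>; the value \<open>v 0\<close> is junk, so \<open>0\<close> is included explicitly.\<close>
definition frac_ideal :: "int \<Rightarrow> 'a set" where
  "frac_ideal n = {x. x = 0 \<or> n \<le> v x}"

lemma mem_frac_ideal: "x \<in> frac_ideal n \<longleftrightarrow> x = 0 \<or> n \<le> v x"
  by (simp add: frac_ideal_def)

lemma v_one [simp]: "v 1 = 0"
  using v_mult[of 1 1] by simp

lemma v_inverse: "x \<noteq> 0 \<Longrightarrow> v (inverse x) = - v x"
  using v_mult[of x "inverse x"] by simp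

lemma v_power: "x \<noteq> 0 \<Longrightarrow> v (x ^ k) = int k * v x"
  by (induction k) (auto simp: v_mult algebra_simps)

lemma v_uminus [simp]: "v (- x) = v x"
proof (cases "x = 0")
  case False
  have "v (- 1) + v (- 1) = 0"
    using v_mult[of "- 1" "- 1"] by simp
  then show ?thesis
    using v_mult[of "- 1" x] False by simp
qed simp

lemma zero_in_frac_ideal [simp]: "0 \<in> frac_ideal n"
  by (simp add: mem_frac_ideal)

lemma frac_ideal_add: "x \<in> frac_ideal n \<Longrightarrow> y \<in> frac_ideal n \<Longrightarrow> x + y \<in> frac_ideal n"
  unfolding mem_frac_ideal using v_ultra[of x y] by fastforce

lemma frac_ideal_uminus [simp]: "- x \<in> frac_ideal n \<longleftrightarrow> x \<in> frac_ideal n"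
  by (simp add: mem_frac_ideal)

lemma frac_ideal_diff: "x \<in> frac_ideal n \<Longrightarrow> y \<in> frac_ideal n \<Longrightarrow> x - y \<in> frac_ideal n"
  using frac_ideal_add[of x n "- y"] by simp

lemma frac_ideal_add_cancel_left [simp]:
  "x \<in> frac_ideal n \<Longrightarrow> x + y \<in> frac_ideal n \<longleftrightarrow> y \<in> frac_ideal n"
  using frac_ideal_diff[of "x + y" n x] frac_ideal_add[of x n y] by auto

lemma frac_ideal_mult: "x \<in> frac_ideal m \<Longrightarrow> y \<in> frac_ideal n \<Longrightarrow> x * y \<in> frac_ideal (m + n)"
  by (cases "x = 0 \<or> y = 0") (auto simp: mem_frac_ideal v_mult)

lemma frac_ideal_antimono: "x \<in> frac_ideal n \<Longrightarrow> m \<le> n \<Longrightarrow> x \<in> frac_ideal m"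
  by (auto simp: mem_frac_ideal)

lemma frac_ideal_subset: "m \<le> n \<Longrightarrow> frac_ideal n \<subseteq> frac_ideal m"
  by (auto simp: mem_frac_ideal)

lemma frac_ideal_mult_iff:
  assumes "c \<noteq> 0"
  shows "x * c \<in> frac_ideal (n + v c) \<longleftrightarrow> x \<in> frac_ideal n"
  using assms v_mult[of x c] by (cases "x = 0") (auto simp: mem_frac_ideal)

lemma frac_ideal_mult_unit_iff: "c \<noteq> 0 \<Longrightarrow> v c = 0 \<Longrightarrow> x * c \<in> frac_ideal n \<longleftrightarrow> x \<in> frac_ideal n"
  using frac_ideal_mult_iff[of c x n] by simp

lemma frac_ideal_divide_unit_iff: "c \<noteq> 0 \<Longrightarrow> v c = 0 \<Longrightarrow> x / c \<in> frac_ideal n \<longleftrightarrow> x \<in> frac_ideal n"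
  using frac_ideal_mult_unit_iff[of c "x / c" n] by simp

lemma frac_ideal_square_root: "x * x \<in> frac_ideal m \<Longrightarrow> x \<in> frac_ideal ((m + 1) div 2)"
  using v_mult[of x x] by (cases "x = 0") (auto simp: mem_frac_ideal)

lemma frac_ideal_one_prime:
  "x \<in> frac_ideal 0 \<Longrightarrow> y \<in> frac_ideal 0 \<Longrightarrow> x * y \<in> frac_ideal 1 \<Longrightarrow>
    x \<in> frac_ideal 1 \<or> y \<in> frac_ideal 1"
  by (cases "x = 0 \<or> y = 0") (auto simp: mem_frac_ideal v_mult)

lemma frac_ideal_mult_cong:
  assumes "x \<in> frac_ideal 0" "y' \<in> frac_ideal 0" "x - x' \<in> frac_ideal 1" "y - y' \<in> frac_ideal 1"
  shows "x * y - x' * y' \<in> frac_ideal 1"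
proof -
  have "x * y - x' * y' = x * (y - y') + (x - x') * y'"
    by (simp add: algebra_simps)
  then show ?thesis
    using frac_ideal_mult[OF assms(1) assms(4)] frac_ideal_mult[OF assms(3) assms(2)]
      frac_ideal_add by fastforce
qed

lemma frac_ideal_quadratic_cong:
  assumes "h \<in> frac_ideal 0" "s \<in> frac_ideal 0" "e \<in> frac_ideal 0" "e' \<in> frac_ideal 0"
    and "h - h' \<in> frac_ideal 1" "s - s' \<in> frac_ideal 1" "e - e' \<in> frac_ideal 1"
  shows "(h * e * e + s * e) - (h' * e' * e' + s' * e') \<in> frac_ideal 1"
proof -
  have "h * e - h' * e' \<in> frac_ideal 1"
    by (rule frac_ideal_mult_cong) (use assms in auto)
  moreover have "h * e \<in> frac_ideal 0"
    using frac_ideal_mult[OF assms(1,3)] by simp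
  ultimately have "h * e * e - h' * e' * e' \<in> frac_ideal 1"
    by (intro frac_ideal_mult_cong) (use assms in auto)
  moreover have "s * e - s' * e' \<in> frac_ideal 1"
    by (rule frac_ideal_mult_cong) (use assms in auto)
  ultimately have "(h * e * e - h' * e' * e') + (s * e - s' * e') \<in> frac_ideal 1"
    by (rule frac_ideal_add)
  then show ?thesis
    by (simp add: algebra_simps)
qed

lemma frac_ideal_Inter: "(\<And>n. x \<in> frac_ideal n) \<Longrightarrow> x = 0"
  using mem_frac_ideal[of x "v x + 1"] by auto

lemma v_add_eq_left:
  assumes "x \<noteq> 0" and "y = 0 \<or> v x < v y"
  shows "x + y \<noteq> 0 \<and> v (x + y) = v x"
proof -
  have "y \<in> frac_ideal (v x + 1)"
    using assms(2) by (auto simp: mem_frac_ideal)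
  moreover have "x \<notin> frac_ideal (v x + 1)"
    using assms(1) by (simp add: mem_frac_ideal)
  ultimately have "x + y \<notin> frac_ideal (v x + 1)"
    using frac_ideal_add_cancel_left[of y "v x + 1" x] by (simp add: add.commute)
  moreover have "x + y \<in> frac_ideal (v x)"
    using assms by (intro frac_ideal_add) (auto simp: mem_frac_ideal)
  ultimately show ?thesis
    by (auto simp: mem_frac_ideal)
qed

lemma v_add_eq_min:
  assumes "x \<noteq> 0" and "y \<noteq> 0" and "v x \<noteq> v y"
  shows "v (x + y) = min (v x) (v y)"
  using v_add_eq_left[of x y] v_add_eq_left[of y x] assms
  by (cases "v x < v y") (auto simp: add.commute)

lemma frac_ideal_cauchy:
  assumes "\<And>i. s (Suc i) - s i \<in> frac_ideal (int i)"
  shows "\<forall>n. \<exists>N. \<forall>i\<ge>N. \<forall>j\<ge>N. s i - s j \<in> frac_ideal n"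
proof
  fix n :: int
  have tail: "s i - s N \<in> frac_ideal (int N)" if "N \<le> i" for i N
    using that
  proof (induction i rule: dec_induct)
    case (step i)
    have "s (Suc i) - s i \<in> frac_ideal (int N)"
      by (rule frac_ideal_antimono[OF assms[of i]]) (use step(1) in simp)
    then have "(s (Suc i) - s i) + (s i - s N) \<in> frac_ideal (int N)"
      using step(3) by (rule frac_ideal_add)
    then show ?case
      by simp
  qed simp
  have "s i - s j \<in> frac_ideal n" if "nat n \<le> i" "nat n \<le> j" for i j
  proof -
    have "(s i - s (nat n)) - (s j - s (nat n)) \<in> frac_ideal (int (nat n))"
      using tail[OF that(1)] tail[OF that(2)] by (rule frac_ideal_diff)
    then have "s i - s j \<in> frac_ideal (int (nat n))"
      by simp
    then show ?thesis
      by (rule frac_ideal_antimono) simp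
  qed
  then show "\<exists>N. \<forall>i\<ge>N. \<forall>j\<ge>N. s i - s j \<in> frac_ideal n"
    by blast
qed

end

locale residue_system = nonarch_valued_field v for v :: "'a::field \<Rightarrow> int" +
  fixes \<pi> :: 'a and R :: "'a set"
  assumes pi_nonzero: "\<pi> \<noteq> 0" and v_pi: "v \<pi> = 1"
    and finite_R: "finite R" and R_integral: "R \<subseteq> frac_ideal 0"
    and zero_in_R: "0 \<in> R" and R_add_closed: "r \<in> R \<Longrightarrow> s \<in> R \<Longrightarrow> r + s \<in> R"
    and R_cover: "x \<in> frac_ideal 0 \<Longrightarrow> \<exists>r\<in>R. x - r \<in> frac_ideal 1"
    and R_distinct: "r \<in> R \<Longrightarrow> s \<in> R \<Longrightarrow> r - s \<in> frac_ideal 1 \<Longrightarrow> r = s"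
begin

lemma v_pi_power: "v (\<pi> ^ k) = int k"
  using v_power[OF pi_nonzero] v_pi by simp

lemma frac_ideal_mult_pi_power_iff: "x * \<pi> ^ k \<in> frac_ideal (n + int k) \<longleftrightarrow> x \<in> frac_ideal n"
  using frac_ideal_mult_iff[of "\<pi> ^ k" x n] pi_nonzero v_pi_power by simp

lemma pi_mult_mem_frac_ideal_iff: "\<pi> * x \<in> frac_ideal (n + 1) \<longleftrightarrow> x \<in> frac_ideal n"
  using frac_ideal_mult_pi_power_iff[of x 1 n] by (simp add: mult.commute)

lemma frac_ideal_divide_pi_power_iff:
  "x / \<pi> ^ k \<in> frac_ideal (n - int k) \<longleftrightarrow> x \<in> frac_ideal n"
  using frac_ideal_mult_pi_power_iff[of "x / \<pi> ^ k" k "n - int k"] pi_nonzero by simp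

definition residue_rep :: "'a \<Rightarrow> 'a" where
  "residue_rep x = (THE r. r \<in> R \<and> x - r \<in> frac_ideal 1)"

lemma residue_rep_unique:
  assumes "r \<in> R" "x - r \<in> frac_ideal 1" "s \<in> R" "x - s \<in> frac_ideal 1"
  shows "r = s"
proof -
  have "r - s = (x - s) - (x - r)"
    by simp
  then show ?thesis
    using R_distinct[of r s] frac_ideal_diff assms by metis
qed

lemma residue_rep: "x \<in> frac_ideal 0 \<Longrightarrow> residue_rep x \<in> R \<and> x - residue_rep x \<in> frac_ideal 1"
  unfolding residue_rep_def by (rule theI') (use R_cover residue_rep_unique in blast)

lemma residue_rep_eq:
  "x \<in> frac_ideal 0 \<Longrightarrow> r \<in> R \<Longrightarrow> x - r \<in> frac_ideal 1 \<Longrightarrow> residue_rep x = r"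
  using residue_rep residue_rep_unique by blast

lemma residue_rep_R: "r \<in> R \<Longrightarrow> residue_rep r = r"
  using residue_rep_eq R_integral by auto

lemma residue_rep_add:
  assumes "x \<in> frac_ideal 0" "y \<in> frac_ideal 0"
  shows "residue_rep (x + y) = residue_rep x + residue_rep y"
proof (rule residue_rep_eq)
  have "x + y - (residue_rep x + residue_rep y) = (x - residue_rep x) + (y - residue_rep y)"
    by (simp add: algebra_simps)
  then show "x + y - (residue_rep x + residue_rep y) \<in> frac_ideal 1"
    using residue_rep assms frac_ideal_add by metis
qed (use assms frac_ideal_add residue_rep R_add_closed in auto)

lemma residue_rep_eq_iff:
  assumes "x \<in> frac_ideal 0" "y \<in> frac_ideal 0"
  shows "residue_rep x = residue_rep y \<longleftrightarrow> x - y \<in> frac_ideal 1"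
proof
  assume "residue_rep x = residue_rep y"
  then have "x - y = (x - residue_rep x) - (y - residue_rep y)"
    by simp
  then show "x - y \<in> frac_ideal 1"
    using residue_rep assms frac_ideal_diff by metis
next
  assume "x - y \<in> frac_ideal 1"
  moreover have "x - residue_rep y = (x - y) + (y - residue_rep y)"
    by simp
  ultimately show "residue_rep x = residue_rep y"
    using residue_rep_eq residue_rep assms frac_ideal_add by metis
qed

lemma residue_rep_eq_0_iff: "x \<in> frac_ideal 0 \<Longrightarrow> residue_rep x = 0 \<longleftrightarrow> x \<in> frac_ideal 1"
  using residue_rep_eq_iff[of x 0] residue_rep_R[OF zero_in_R] by simp

lemma frac_ideal_Suc_decomp:
  "frac_ideal (- int (Suc k)) = (\<Union>r\<in>R. (+) (r / \<pi> ^ Suc k) ` frac_ideal (- int k))"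
proof (intro equalityI subsetI)
  fix x assume x: "x \<in> frac_ideal (- int (Suc k))"
  define r where "r = residue_rep (x * \<pi> ^ Suc k)"
  have "x * \<pi> ^ Suc k \<in> frac_ideal 0"
    using frac_ideal_mult_pi_power_iff[of x "Suc k" "- int (Suc k)"] x by simp
  then have r: "r \<in> R" "x * \<pi> ^ Suc k - r \<in> frac_ideal 1"
    using residue_rep by (auto simp: r_def)
  have "(x * \<pi> ^ Suc k - r) / \<pi> ^ Suc k = x - r / \<pi> ^ Suc k"
    using pi_nonzero by (simp add: field_simps del: power_Suc)
  then have "x - r / \<pi> ^ Suc k \<in> frac_ideal (- int k)"
    using frac_ideal_divide_pi_power_iff[of "x * \<pi> ^ Suc k - r" "Suc k" 1] r(2) by simp
  moreover have "x = r / \<pi> ^ Suc k + (x - r / \<pi> ^ Suc k)"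
    by simp
  ultimately show "x \<in> (\<Union>r\<in>R. (+) (r / \<pi> ^ Suc k) ` frac_ideal (- int k))"
    using r(1) by blast
next
  fix x assume "x \<in> (\<Union>r\<in>R. (+) (r / \<pi> ^ Suc k) ` frac_ideal (- int k))"
  then obtain r z where rz: "r \<in> R" "z \<in> frac_ideal (- int k)" "x = r / \<pi> ^ Suc k + z"
    by blast
  have "r / \<pi> ^ Suc k \<in> frac_ideal (- int (Suc k))"
    using frac_ideal_divide_pi_power_iff[of r "Suc k" 0] rz(1) R_integral by auto
  moreover have "z \<in> frac_ideal (- int (Suc k))"
    using frac_ideal_antimono[OF rz(2)] by simp
  ultimately show "x \<in> frac_ideal (- int (Suc k))"
    using rz(3) frac_ideal_add by simp
qed

lemma frac_ideal_Suc_decomp_disjoint: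
  "disjoint_family_on (\<lambda>r. (+) (r / \<pi> ^ Suc k) ` frac_ideal (- int k)) R"
unfolding disjoint_family_on_def
proof (intro ballI impI, rule ccontr)
  fix r s assume rs: "r \<in> R" "s \<in> R" "r \<noteq> s"
    and "(+) (r / \<pi> ^ Suc k) ` frac_ideal (- int k) \<inter> (+) (s / \<pi> ^ Suc k) ` frac_ideal (- int k) \<noteq> {}"
  then obtain y z where yz: "y \<in> frac_ideal (- int k)" "z \<in> frac_ideal (- int k)"
    "r / \<pi> ^ Suc k + y = s / \<pi> ^ Suc k + z"
    by blast
  have "(r - s) / \<pi> ^ Suc k = z - y"
    using yz(3) by (simp add: diff_divide_distrib algebra_simps)
  then have "(r - s) / \<pi> ^ Suc k \<in> frac_ideal (1 - int (Suc k))"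
    using frac_ideal_diff[OF yz(2,1)] by simp
  then show False
    using frac_ideal_divide_pi_power_iff R_distinct rs by blast
qed

lemma finite_coset_reps:
  "\<exists>F. finite F \<and> (\<forall>x\<in>frac_ideal (- int k). \<exists>a\<in>F. x - a \<in> frac_ideal 0)"
proof (induction k)
  case 0
  show ?case
    by (rule exI[of _ "{0}"]) simp
next
  case (Suc k)
  then obtain F where F: "finite F" "\<forall>x\<in>frac_ideal (- int k). \<exists>a\<in>F. x - a \<in> frac_ideal 0"
    by blast
  define F' where "F' = (\<lambda>(r, a). r / \<pi> ^ Suc k + a) ` (R \<times> F)"
  have "\<exists>a\<in>F'. x - a \<in> frac_ideal 0" if "x \<in> frac_ideal (- int (Suc k))" for x
  proof -
    from that obtain r z where rz: "r \<in> R" "z \<in> frac_ideal (- int k)" "x = r / \<pi> ^ Suc k + z"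
      by (subst (asm) frac_ideal_Suc_decomp) blast
    obtain a where a: "a \<in> F" "z - a \<in> frac_ideal 0"
      using F(2) rz(2) by blast
    have "r / \<pi> ^ Suc k + a \<in> F'"
      unfolding F'_def using rz(1) a(1) by (intro image_eqI[of _ _ "(r, a)"]) simp_all
    moreover have "x - (r / \<pi> ^ Suc k + a) \<in> frac_ideal 0"
      using a(2) by (simp add: rz(3))
    ultimately show ?thesis
      by blast
  qed
  moreover have "finite F'"
    unfolding F'_def using F(1) finite_R by simp
  ultimately show ?case
    by blast
qed

end

section \<open>Haar measure of bounded sets stable under the integers\<close>

locale haar_residue_system = residue_system v \<pi> R for v :: "'a::field \<Rightarrow> int" and \<pi> R +
  fixes mu :: "'a measure"
  assumes haar: "is_haar v mu"
begin

lemma vball_eq: "vball v c n = (+) c ` frac_ideal n"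
proof -
  have "y \<in> vball v c n \<longleftrightarrow> y - c \<in> frac_ideal n" for y
    by (auto simp: vball_def mem_frac_ideal)
  moreover have "y \<in> (+) c ` frac_ideal n \<longleftrightarrow> y - c \<in> frac_ideal n" for y
    by (auto simp: image_iff algebra_simps intro: bexI[of _ "y - c"])
  ultimately show ?thesis
    by blast
qed

lemma sets_translate_frac_ideal: "(+) c ` frac_ideal n \<in> sets mu"
proof -
  have "vball v c n \<in> sigma_sets UNIV (range (\<lambda>(c, n). vball v c n))"
    by (rule sigma_sets.Basic) (rule range_eqI[of _ _ "(c, n)"], simp)
  then show ?thesis
    using haar vball_eq by (simp add: is_haar_def)
qed

lemma sets_frac_ideal: "frac_ideal n \<in> sets mu"
  using sets_translate_frac_ideal[of 0 n] by simp

lemma sets_translate: "A \<in> sets mu \<Longrightarrow> (+) c ` A \<in> sets mu"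
  using haar unfolding is_haar_def by blast

lemma emeasure_translate: "A \<in> sets mu \<Longrightarrow> emeasure mu ((+) c ` A) = emeasure mu A"
  using haar unfolding is_haar_def by blast

lemma emeasure_frac_ideal: "emeasure mu (frac_ideal (- int k)) = ennreal (real (card R) ^ k)"
proof (induction k)
  case 0
  show ?case
    using haar vball_eq[of 0 0] by (simp add: is_haar_def)
next
  case (Suc k)
  let ?C = "\<lambda>r. (+) (r / \<pi> ^ Suc k) ` frac_ideal (- int k)"
  have "emeasure mu (frac_ideal (- int (Suc k))) = emeasure mu (\<Union> (?C ` R))"
    using frac_ideal_Suc_decomp by simp
  also have "\<dots> = (\<Sum>r\<in>R. emeasure mu (?C r))"
    using sets_translate_frac_ideal frac_ideal_Suc_decomp_disjoint finite_R
    by (intro sum_emeasure[symmetric]) auto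
  also have "\<dots> = of_nat (card R) * ennreal (real (card R) ^ k)"
    using emeasure_translate[OF sets_frac_ideal] Suc.IH by simp
  finally show ?case
    by (simp add: ennreal_of_nat_eq_real_of_nat ennreal_mult)
qed

lemma measure_frac_ideal: "measure mu (frac_ideal (- int k)) = real (card R) ^ k"
  using emeasure_frac_ideal by (simp add: measure_def)

lemma emeasure_bounded_finite:
  assumes "A \<subseteq> frac_ideal (- int k)"
  shows "emeasure mu A \<noteq> \<infinity>"
  unfolding infinity_ennreal_def
proof (rule neq_top_trans)
  show "emeasure mu A \<le> emeasure mu (frac_ideal (- int k))"
    by (rule emeasure_mono[OF assms sets_frac_ideal])
qed (simp add: emeasure_frac_ideal)

text \<open>A bounded set that is a union of cosets of the integers is a finite union of them.\<close>
lemma sets_bounded_integral_stable: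
  assumes "H \<subseteq> frac_ideal (- int k)" and "\<And>x z. x \<in> H \<Longrightarrow> z \<in> frac_ideal 0 \<Longrightarrow> x + z \<in> H"
  shows "H \<in> sets mu"
proof -
  obtain F where F: "finite F" "\<forall>x\<in>frac_ideal (- int k). \<exists>a\<in>F. x - a \<in> frac_ideal 0"
    using finite_coset_reps by blast
  define F' where "F' = {a\<in>F. (+) a ` frac_ideal 0 \<subseteq> H}"
  have "H \<subseteq> (\<Union>a\<in>F'. (+) a ` frac_ideal 0)"
  proof
    fix x assume x: "x \<in> H"
    then obtain a where a: "a \<in> F" "x - a \<in> frac_ideal 0"
      using F(2) assms(1) by blast
    have "a + z \<in> H" if "z \<in> frac_ideal 0" for z
    proof -
      have "a + z = x + (z - (x - a))"
        by simp
      then show ?thesis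
        using assms(2)[OF x frac_ideal_diff[OF that a(2)]] by (simp add: add.commute)
    qed
    then have "(+) a ` frac_ideal 0 \<subseteq> H"
      by blast
    moreover have "x = a + (x - a)"
      by simp
    ultimately show "x \<in> (\<Union>a\<in>F'. (+) a ` frac_ideal 0)"
      using a unfolding F'_def by blast
  qed
  then have "H = (\<Union>a\<in>F'. (+) a ` frac_ideal 0)"
    unfolding F'_def by blast
  also have "\<dots> \<in> sets mu"
    using F(1) sets_translate_frac_ideal unfolding F'_def by (intro sets.finite_UN) auto
  finally show ?thesis .
qed

lemma measure_index_two:
  assumes "H \<subseteq> frac_ideal (- int k)" and "\<And>x z. x \<in> H \<Longrightarrow> z \<in> frac_ideal 0 \<Longrightarrow> x + z \<in> H"
    and "frac_ideal (- int k) = H \<union> (+) c ` H" and "H \<inter> (+) c ` H = {}"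
  shows "measure mu H = real (card R) ^ k / 2"
proof -
  have H: "H \<in> sets mu"
    using sets_bounded_integral_stable assms(1,2) by blast
  have fin: "emeasure mu H \<noteq> \<infinity>"
    using emeasure_bounded_finite[OF assms(1)] .
  have "measure mu (frac_ideal (- int k)) = measure mu H + measure mu ((+) c ` H)"
    unfolding assms(3)
    by (rule measure_Union[OF fin _ H sets_translate[OF H] assms(4)])
      (use fin emeasure_translate[OF H] in simp)
  also have "measure mu ((+) c ` H) = measure mu H"
    using emeasure_translate[OF H] by (simp add: measure_def)
  finally show ?thesis
    using measure_frac_ideal[of k] by linarith
qed

end

section \<open>The conic group in characteristic two\<close>

locale conic_setting = residue_system v \<pi> R for v :: "'a::field \<Rightarrow> int" and \<pi> R +
  fixes T :: 'a
  assumes char_two: "(1::'a) + 1 = 0"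
    and complete: "\<And>s::nat \<Rightarrow> 'a. \<forall>n. \<exists>N. \<forall>i\<ge>N. \<forall>j\<ge>N. s i - s j \<in> frac_ideal n \<Longrightarrow>
      \<exists>l. \<forall>n. \<exists>N. \<forall>i\<ge>N. s i - l \<in> frac_ideal n"
    and T_nonzero: "T \<noteq> 0" and v_T: "v T = 0"
    and T_nonsquare_mod: "r \<in> R \<Longrightarrow> T - r * r \<notin> frac_ideal 2"
begin

lemma add_self [simp]: "x + x = (0::'a)"
proof -
  have "x + x = (1 + 1) * x"
    by (simp only: distrib_right mult_1_left)
  then show ?thesis
    by (simp only: char_two mult_zero_left)
qed

lemma uminus_self [simp]: "- x = (x::'a)"
  by (rule minus_unique[OF add_self])

lemma diff_eq_add [simp]: "x - y = x + (y::'a)"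
  by (simp add: diff_conv_add_uminus)

lemma add_self_left [simp]: "x + (x + y) = (y::'a)"
  by (simp add: add.assoc[symmetric])

lemma add_self_right [simp]: "x + y + y = (x::'a)"
  by (simp add: add.assoc)

lemma add_eq_0_iff_eq [simp]: "x + y = 0 \<longleftrightarrow> x = (y::'a)"
proof
  assume "x + y = 0"
  then have "x + (x + y) = x"
    by simp
  then show "x = y"
    by simp
qed simp

lemma square_add: "(x + y) * (x + y) = x * x + y * (y::'a)"
proof -
  have "(x + y) * (x + y) = x * x + y * y + (x * y + x * y)"
    by (simp add: algebra_simps)
  then show ?thesis
    by simp
qed

lemma artin_schreier_iterate_step:
  fixes s :: "nat \<Rightarrow> 'a"
  assumes a: "a \<in> frac_ideal 1" and s_0: "s 0 = a" and s_Suc: "\<And>n. s (Suc n) = a + s n * s n"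
  shows "s (Suc n) - s n \<in> frac_ideal (int n + 1)"
proof (induction n)
  case 0
  have "s (Suc 0) - s 0 = a * a"
    by (simp add: s_0 s_Suc add.commute)
  then show ?case
    using frac_ideal_antimono[OF frac_ideal_mult[OF a a]] by simp
next
  case (Suc n)
  have "s (Suc (Suc n)) - s (Suc n) = (s (Suc n) - s n) * (s (Suc n) - s n)"
    using s_Suc[of "Suc n"] s_Suc[of n] by (simp add: square_add algebra_simps)
  then show ?case
    using frac_ideal_antimono[OF frac_ideal_mult[OF Suc Suc]] by simp
qed

text \<open>Hensel's lemma for \<open>Y\<^sup>2 + Y - a\<close>: the iteration \<open>Y \<mapsto> a + Y\<^sup>2\<close> started at \<open>a\<close> converges.\<close>
lemma artin_schreier_solvable:
  assumes a: "a \<in> frac_ideal 1"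
  shows "\<exists>Y. Y * Y + Y = a"
proof -
  define s where "s = rec_nat a (\<lambda>_ x. a + x * x)"
  have s_Suc: "s (Suc n) = a + s n * s n" for n
    by (simp add: s_def)
  have step: "s (Suc n) - s n \<in> frac_ideal (int n + 1)" for n
    by (rule artin_schreier_iterate_step[OF a]) (simp_all add: s_def)
  have "\<forall>n. \<exists>N. \<forall>i\<ge>N. \<forall>j\<ge>N. s i - s j \<in> frac_ideal n"
    by (rule frac_ideal_cauchy) (rule frac_ideal_antimono[OF step], simp)
  then obtain l where l: "\<forall>n. \<exists>N. \<forall>i\<ge>N. s i - l \<in> frac_ideal n"
    using complete by blast
  have small: "l * l + l + a \<in> frac_ideal n" if n: "1 \<le> n" for n
  proof -
    obtain N where N: "\<forall>i\<ge>N. s i - l \<in> frac_ideal n"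
      using l by blast
    define i where "i = max N (nat n)"
    define e where "e = s i - l"
    have e: "e \<in> frac_ideal n"
      using N by (simp add: i_def e_def)
    have eq: "l * l + l + a = (s (Suc i) - s i) + (e * e + e)"
      by (simp add: e_def s_Suc square_add algebra_simps)
    have "s (Suc i) - s i \<in> frac_ideal n"
      by (rule frac_ideal_antimono[OF step]) (simp add: i_def)
    moreover have "e * e \<in> frac_ideal n"
      by (rule frac_ideal_antimono[OF frac_ideal_mult[OF e e]]) (use n in simp)
    ultimately show ?thesis
      unfolding eq by (intro frac_ideal_add e)
  qed
  have "l * l + l + a = 0"
  proof (rule frac_ideal_Inter)
    fix n :: int
    show "l * l + l + a \<in> frac_ideal n"
      by (rule frac_ideal_antimono[OF small[of "max 1 n"]]) auto
  qed
  then show ?thesis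
    by auto
qed

text \<open>Squaring is additive and injective on residues, hence onto the finite residue field.\<close>
lemma residue_square_root:
  assumes a: "a \<in> frac_ideal 0"
  shows "\<exists>e\<in>R. a - e * e \<in> frac_ideal 1"
proof -
  let ?sq = "\<lambda>e. residue_rep (e * e)"
  have square: "e * e \<in> frac_ideal 0" if "e \<in> R" for e
    using frac_ideal_mult[of e 0 e 0] that R_integral by auto
  have "inj_on ?sq R"
  proof (rule inj_onI)
    fix x y assume x: "x \<in> R" and y: "y \<in> R" and "?sq x = ?sq y"
    then have "x * x - y * y \<in> frac_ideal 1"
      using residue_rep_eq_iff[OF square[OF x] square[OF y]] by blast
    moreover have "x * x - y * y = (x - y) * (x - y)"
      by (simp add: square_add)
    ultimately have "x - y \<in> frac_ideal 1"
      using frac_ideal_square_root[of "x - y" 1] by simp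
    then show "x = y"
      using R_distinct x y by blast
  qed
  moreover have "?sq ` R \<subseteq> R"
    using residue_rep square by blast
  ultimately have "?sq ` R = R"
    by (intro endo_inj_surj finite_R)
  then have "residue_rep a \<in> ?sq ` R"
    using residue_rep[OF a] by simp
  then obtain e where e: "e \<in> R" "residue_rep a = residue_rep (e * e)"
    by blast
  then have "a - e * e \<in> frac_ideal 1"
    using residue_rep_eq_iff[OF a square[OF e(1)]] by blast
  then show ?thesis
    using e by blast
qed

lemma T_nonsquare: "T - s * s \<notin> frac_ideal 2"
proof
  assume A: "T - s * s \<in> frac_ideal 2"
  have T: "T \<in> frac_ideal 0"
    by (simp add: mem_frac_ideal v_T)
  have "s * s = T - (T - s * s)"
    by simp
  then have "s * s \<in> frac_ideal 0"
    using frac_ideal_diff[OF T frac_ideal_antimono[OF A]] by simp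
  then have s: "s \<in> frac_ideal 0"
    using frac_ideal_square_root[of s 0] by simp
  define r where "r = residue_rep s"
  have r: "r \<in> R" and z: "s - r \<in> frac_ideal 1"
    using residue_rep[OF s] by (auto simp: r_def)
  have eq: "T - r * r = (T - s * s) + (s - r) * (s - r)"
    by (simp add: square_add algebra_simps)
  have "(s - r) * (s - r) \<in> frac_ideal 2"
    using frac_ideal_mult[OF z z] by simp
  then have "T - r * r \<in> frac_ideal 2"
    unfolding eq by (rule frac_ideal_add[OF A])
  then show False
    using T_nonsquare_mod[OF r] by simp
qed

lemma T_not_square: "T \<noteq> s * s"
  using T_nonsquare[of s] by auto

lemma v_T_minus_square:
  shows "v (T - s * s) \<le> 1"
    and "s \<noteq> 0 \<Longrightarrow> v s < 0 \<Longrightarrow> v (T - s * s) = 2 * v s"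
    and "0 \<le> v s \<Longrightarrow> 0 \<le> v (T - s * s)"
proof -
  show "v (T - s * s) \<le> 1"
    using T_nonsquare[of s] T_not_square[of s] by (simp add: mem_frac_ideal)
next
  assume s: "s \<noteq> 0" "v s < 0"
  then have "v (s * s) < v T"
    using v_mult[of s s] v_T by simp
  then show "v (T - s * s) = 2 * v s"
    using v_add_eq_left[of "s * s" T] v_mult[of s s] s by (simp add: add.commute)
next
  assume "0 \<le> v s"
  then have "s \<in> frac_ideal 0"
    by (simp add: mem_frac_ideal)
  then have "T - s * s \<in> frac_ideal 0"
    using frac_ideal_diff[of T 0 "s * s"] frac_ideal_mult[of s 0 s 0] v_T
    by (simp add: mem_frac_ideal)
  then show "0 \<le> v (T - s * s)"
    using T_not_square[of s] by (simp add: mem_frac_ideal)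
qed

text \<open>\<open>T = T_root\<^sup>2 + \<pi> T_defect\<close>, where \<open>T_root \<in> R\<close> and \<open>T_defect\<close> is a unit since \<open>T\<close> is not a
  square modulo \<open>\<pp>\<^sup>2\<close>.\<close>
definition T_root :: 'a where
  "T_root = (SOME e. e \<in> R \<and> T - e * e \<in> frac_ideal 1)"

definition T_defect :: 'a where
  "T_defect = (T - T_root * T_root) / \<pi>"

lemma T_root: "T_root \<in> R" "T - T_root * T_root \<in> frac_ideal 1"
proof -
  have "T \<in> frac_ideal 0"
    by (simp add: mem_frac_ideal v_T)
  then have "\<exists>e. e \<in> R \<and> T - e * e \<in> frac_ideal 1"
    using residue_square_root by blast
  from someI_ex[OF this] show "T_root \<in> R" "T - T_root * T_root \<in> frac_ideal 1"
    unfolding T_root_def by blast+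
qed

lemma v_T_root: "T_root \<noteq> 0 \<and> v T_root = 0"
proof -
  have "T_root \<in> frac_ideal 0"
    using T_root(1) R_integral by blast
  moreover have "T_root \<notin> frac_ideal 1"
  proof
    assume "T_root \<in> frac_ideal 1"
    then have "T_root * T_root \<in> frac_ideal 1"
      using frac_ideal_antimono[OF frac_ideal_mult] by fastforce
    then have "(T - T_root * T_root) + T_root * T_root \<in> frac_ideal 1"
      by (rule frac_ideal_add[OF T_root(2)])
    then have "T \<in> frac_ideal 1"
      by simp
    then show False
      using T_nonzero v_T by (simp add: mem_frac_ideal)
  qed
  ultimately show ?thesis
    by (auto simp: mem_frac_ideal)
qed

lemma T_defect_times_pi: "T_defect * \<pi> = T - T_root * T_root"
  using pi_nonzero by (simp add: T_defect_def)

lemma v_T_defect: "T_defect \<noteq> 0 \<and> v T_defect = 0"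
proof -
  have "T_defect \<in> frac_ideal 0"
    using frac_ideal_mult_iff[OF pi_nonzero, of T_defect 0] T_defect_times_pi T_root(2) v_pi
    by simp
  moreover have "T_defect \<notin> frac_ideal 1"
    using frac_ideal_mult_iff[OF pi_nonzero, of T_defect 1] T_defect_times_pi
      T_nonsquare[of T_root] v_pi by simp
  ultimately show ?thesis
    by (auto simp: mem_frac_ideal)
qed

lemma T_root_T_defect_unique:
  assumes "T - s * s \<in> frac_ideal 1"
  shows "s - T_root \<in> frac_ideal 1" and "(T - s * s) / \<pi> - T_defect \<in> frac_ideal 1"
proof -
  have "(s - T_root) * (s - T_root) = (T - T_root * T_root) - (T - s * s)"
    by (simp add: square_add algebra_simps)
  then show s1: "s - T_root \<in> frac_ideal 1"
    using frac_ideal_square_root[of "s - T_root" 1] frac_ideal_diff[OF T_root(2) assms] by simp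
  have "(T - s * s) / \<pi> - T_defect = ((T - s * s) - (T - T_root * T_root)) / \<pi>"
    unfolding T_defect_def by (rule diff_divide_distrib[symmetric])
  also have "\<dots> = (s - T_root) * (s - T_root) / \<pi>"
    by (simp add: square_add algebra_simps)
  finally show "(T - s * s) / \<pi> - T_defect \<in> frac_ideal 1"
    using frac_ideal_divide_pi_power_iff[of "(s - T_root) * (s - T_root)" 1 2]
      frac_ideal_mult[OF s1 s1] by simp
qed

definition conic_group :: "'a set" where
  "conic_group = {T * u * u + Y * Y + Y | u Y. True}"

lemma conic_groupI: "T * u * u + Y * Y + Y \<in> conic_group"
  unfolding conic_group_def by blast

lemma zero_in_conic_group: "0 \<in> conic_group"
  using conic_groupI[of 0 0] by simp

lemma conic_group_add: "x \<in> conic_group \<Longrightarrow> y \<in> conic_group \<Longrightarrow> x + y \<in> conic_group"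
proof -
  assume "x \<in> conic_group" "y \<in> conic_group"
  then obtain u Y u' Y' where "x = T * u * u + Y * Y + Y" "y = T * u' * u' + Y' * Y' + Y'"
    unfolding conic_group_def by blast
  then have "x + y = T * (u + u') * (u + u') + (Y + Y') * (Y + Y') + (Y + Y')"
    unfolding mult.assoc square_add by (simp add: algebra_simps)
  then show ?thesis
    using conic_groupI by simp
qed

lemma conic_group_add_cancel_left [simp]:
  "x \<in> conic_group \<Longrightarrow> x + y \<in> conic_group \<longleftrightarrow> y \<in> conic_group"
  using conic_group_add[of x "x + y"] conic_group_add[of x y] by auto

lemma frac_ideal_one_subset_conic_group: "frac_ideal 1 \<subseteq> conic_group"
proof
  fix a assume "a \<in> frac_ideal 1"
  then obtain Y where "Y * Y + Y = a"
    using artin_schreier_solvable by blast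
  then show "a \<in> conic_group"
    using conic_groupI[of 0 Y] by simp
qed

lemma integral_subset_conic_group: "frac_ideal 0 \<subseteq> conic_group"
proof
  fix a assume a: "a \<in> frac_ideal 0"
  then have "a / T \<in> frac_ideal 0"
    using frac_ideal_divide_unit_iff[of T a 0] T_nonzero v_T by simp
  then obtain e where e: "e \<in> R" "a / T - e * e \<in> frac_ideal 1"
    using residue_square_root by blast
  have "(a / T - e * e) * T = a - T * e * e"
    using T_nonzero by (simp add: algebra_simps)
  then have "a - T * e * e \<in> conic_group"
    using frac_ideal_mult_unit_iff[of T "a / T - e * e" 1] T_nonzero v_T e(2)
      frac_ideal_one_subset_conic_group by auto
  moreover have "T * e * e \<in> conic_group"
    using conic_groupI[of e 0] by simp
  ultimately show "a \<in> conic_group"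
    using conic_group_add[of "a - T * e * e" "T * e * e"] by simp
qed

text \<open>Dehomogenize at \<open>x\<^sub>1 = 1\<close>; points with \<open>x\<^sub>1 = 0\<close> would make \<open>T\<close> a square.\<close>
lemma conic_has_point_iff: "conic_has_point T y \<longleftrightarrow> y \<in> conic_group"
proof
  assume "conic_has_point T y"
  then obtain x0 x1 x2 where nz: "(x0, x1, x2) \<noteq> (0, 0, 0)"
    and eq: "x0\<^sup>2 + x0 * x1 + y * x1\<^sup>2 = T * x2\<^sup>2"
    unfolding conic_has_point_def by blast
  show "y \<in> conic_group"
  proof (cases "x1 = 0")
    case True
    with eq have eq2: "x0 * x0 = T * (x2 * x2)"
      by (simp add: power2_eq_square)
    show ?thesis
    proof (cases "x2 = 0")
      case True
      with eq2 nz \<open>x1 = 0\<close> show ?thesis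
        by simp
    next
      case False
      then have "T = (x0 / x2) * (x0 / x2)"
        using eq2 by (simp add: field_simps)
      then show ?thesis
        using T_not_square by blast
    qed
  next
    case False
    have "(x0 / x1) * (x0 / x1) + x0 / x1 + y = T * (x2 / x1) * (x2 / x1)"
      using eq False by (simp add: field_simps power2_eq_square)
    then have "y = T * (x2 / x1) * (x2 / x1) + ((x0 / x1) * (x0 / x1) + x0 / x1)"
      by (metis add_self_left add.commute)
    then show ?thesis
      using conic_groupI[of "x2 / x1" "x0 / x1"] by (simp add: add.assoc)
  qed
next
  assume "y \<in> conic_group"
  then obtain u Y where y: "y = T * u * u + Y * Y + Y"
    unfolding conic_group_def by blast
  have "Y\<^sup>2 + Y * 1 + y * 1\<^sup>2 = T * u\<^sup>2"
    unfolding y by (simp add: power2_eq_square algebra_simps)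
  then show "conic_has_point T y"
    unfolding conic_has_point_def by (intro exI[of _ Y] exI[of _ 1] exI[of _ u]) simp
qed

lemma conic_group_approx_even:
  assumes c: "c \<in> frac_ideal 0"
  shows "\<exists>g\<in>conic_group. c - g * \<pi> ^ (2 * i) \<in> frac_ideal 1"
proof -
  have "c / T \<in> frac_ideal 0"
    using frac_ideal_divide_unit_iff[of T c 0] c T_nonzero v_T by simp
  then obtain e where e: "e \<in> R" "c / T - e * e \<in> frac_ideal 1"
    using residue_square_root by blast
  define g where "g = T * (e / \<pi> ^ i) * (e / \<pi> ^ i)"
  have "\<pi> ^ (2 * i) = \<pi> ^ i * \<pi> ^ i"
    by (simp add: mult_2 power_add)
  then have "c - g * \<pi> ^ (2 * i) = (c / T - e * e) * T"
    using T_nonzero pi_nonzero by (simp add: g_def field_simps)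
  then have "c - g * \<pi> ^ (2 * i) \<in> frac_ideal 1"
    using frac_ideal_mult_unit_iff[of T "c / T - e * e" 1] T_nonzero v_T e(2) by simp
  moreover have "g \<in> conic_group"
    using conic_groupI[of "e / \<pi> ^ i" 0] by (simp add: g_def)
  ultimately show ?thesis
    by blast
qed

text \<open>The witness is \<open>T u\<^sup>2 + (T_root u)\<^sup>2 + T_root u = T_defect \<pi> u\<^sup>2 + T_root u\<close>; its second
  summand is one order smaller than the first.\<close>
lemma conic_group_approx_odd:
  assumes c: "c \<in> frac_ideal 0" and i: "1 \<le> i"
  shows "\<exists>g\<in>conic_group. c - g * \<pi> ^ (2 * i + 1) \<in> frac_ideal 1"
proof -
  have "c / T_defect \<in> frac_ideal 0"
    using frac_ideal_divide_unit_iff[of T_defect c 0] c v_T_defect by simp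
  then obtain e where e: "e \<in> R" "c / T_defect - e * e \<in> frac_ideal 1"
    using residue_square_root by blast
  define u where "u = e / \<pi> ^ (i + 1)"
  define g where "g = T * u * u + (T_root * u) * (T_root * u) + T_root * u"
  have "g = (T - T_root * T_root) * u * u + T_root * u"
    by (simp add: g_def algebra_simps)
  also have "\<dots> = T_defect * \<pi> * u * u + T_root * u"
    by (simp add: T_defect_times_pi)
  finally have "g = T_defect * \<pi> * u * u + T_root * u" .
  moreover have "\<pi> ^ (2 * i + 1) = \<pi> ^ i * \<pi> ^ i * \<pi>"
    by (simp add: mult_2 power_add)
  ultimately have "c - g * \<pi> ^ (2 * i + 1) =
      (c / T_defect - e * e) * T_defect - T_root * e * \<pi> ^ i"
    using v_T_defect pi_nonzero by (simp add: u_def field_simps)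
  moreover have "(c / T_defect - e * e) * T_defect \<in> frac_ideal 1"
    using frac_ideal_mult_unit_iff[of T_defect "c / T_defect - e * e" 1] v_T_defect e(2) by simp
  moreover have "T_root * e * \<pi> ^ i \<in> frac_ideal 1"
  proof -
    have "T_root * e \<in> frac_ideal 0"
      using frac_ideal_mult[of T_root 0 e 0] T_root(1) e(1) R_integral by auto
    then have "T_root * e * \<pi> ^ i \<in> frac_ideal (int i)"
      using frac_ideal_mult_pi_power_iff[of "T_root * e" i 0] by simp
    then show ?thesis
      by (rule frac_ideal_antimono) (use i in simp)
  qed
  ultimately have "c - g * \<pi> ^ (2 * i + 1) \<in> frac_ideal 1"
    using frac_ideal_diff by metis
  moreover have "g \<in> conic_group"
    using conic_groupI[of u "T_root * u"] by (simp add: g_def)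
  ultimately show ?thesis
    by blast
qed

lemma conic_group_approx_step:
  assumes y: "y \<in> frac_ideal (- int j)" and j: "2 \<le> j"
  shows "\<exists>g\<in>conic_group. y - g \<in> frac_ideal (1 - int j)"
proof -
  define c where "c = y * \<pi> ^ j"
  have c: "c \<in> frac_ideal 0"
    using frac_ideal_mult_pi_power_iff[of y j "- int j"] y by (simp add: c_def)
  obtain g where g: "g \<in> conic_group" "c - g * \<pi> ^ j \<in> frac_ideal 1"
  proof (cases "even j")
    case True
    then obtain i where "j = 2 * i"
      by blast
    then show ?thesis
      using conic_group_approx_even[OF c, of i] that by blast
  next
    case False
    then obtain i where "j = 2 * i + 1"
      using oddE by blast
    then show ?thesis
      using conic_group_approx_odd[OF c, of i] j that by auto
  qed
  have "(c - g * \<pi> ^ j) / \<pi> ^ j = y - g"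
    using pi_nonzero by (simp add: c_def field_simps)
  then show ?thesis
    using frac_ideal_divide_pi_power_iff[of "c - g * \<pi> ^ j" j 1] g by auto
qed

lemma conic_group_approx:
  assumes "y \<in> frac_ideal (- int k)"
  shows "\<exists>g\<in>conic_group. y - g \<in> frac_ideal (- 1)"
  using assms
proof (induction k arbitrary: y)
  case 0
  then have "y - 0 \<in> frac_ideal (- 1)"
    using frac_ideal_antimono[of y 0 "- 1"] by simp
  with zero_in_conic_group show ?case
    by (intro bexI[of _ 0])
next
  case (Suc k)
  show ?case
  proof (cases "k = 0")
    case True
    then have "y - 0 \<in> frac_ideal (- 1)"
      using Suc.prems by simp
    with zero_in_conic_group show ?thesis
      by (intro bexI[of _ 0])
  next
    case False
    then obtain g1 where g1: "g1 \<in> conic_group" "y - g1 \<in> frac_ideal (- int k)"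
      using conic_group_approx_step[OF Suc.prems] by fastforce
    then obtain g2 where g2: "g2 \<in> conic_group" "(y - g1) - g2 \<in> frac_ideal (- 1)"
      using Suc.IH by blast
    have "y - (g1 + g2) = (y - g1) - g2"
      by (simp add: algebra_simps)
    then show ?thesis
      using g1(1) g2 conic_group_add by metis
  qed
qed

text \<open>On \<open>\<pp>\<^sup>-\<^sup>1/\<OO>\<close>, identified with the residue field via \<open>x \<mapsto> \<pi> x\<close>, the image of
  \<^const>\<open>conic_group\<close> is the image of this additive map (\<open>level_one_conic_iff\<close>).\<close>
definition residue_form :: "'a \<Rightarrow> 'a" where
  "residue_form e = residue_rep (T_defect * e * e + T_root * e)"

lemma form_integral: "e \<in> frac_ideal 0 \<Longrightarrow> T_defect * e * e + T_root * e \<in> frac_ideal 0"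
proof -
  assume e: "e \<in> frac_ideal 0"
  have "T_defect \<in> frac_ideal 0" "T_root \<in> frac_ideal 0"
    using v_T_defect v_T_root by (auto simp: mem_frac_ideal)
  then show ?thesis
    using frac_ideal_mult[of _ 0 e 0] e frac_ideal_add by simp
qed

lemma residue_form_in_R: "e \<in> R \<Longrightarrow> residue_form e \<in> R"
  unfolding residue_form_def using residue_rep form_integral R_integral by blast

lemma residue_form_add:
  assumes "a \<in> R" "b \<in> R"
  shows "residue_form (a + b) = residue_form a + residue_form b"
proof -
  have "T_defect * (a + b) * (a + b) + T_root * (a + b) =
      (T_defect * a * a + T_root * a) + (T_defect * b * b + T_root * b)"
    unfolding mult.assoc square_add by (simp add: algebra_simps)
  then show ?thesis
    unfolding residue_form_def using residue_rep_add form_integral R_integral assms by auto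
qed

definition form_root :: 'a where
  "form_root = residue_rep (T_root / T_defect)"

lemma T_root_divide_T_defect: "T_root / T_defect \<in> frac_ideal 0" "T_root / T_defect \<notin> frac_ideal 1"
  using frac_ideal_divide_unit_iff[of T_defect T_root] v_T_defect v_T_root
  by (auto simp: mem_frac_ideal)

lemma form_root: "form_root \<in> R" "form_root \<noteq> 0" "form_root - T_root / T_defect \<in> frac_ideal 1"
  unfolding form_root_def
  using residue_rep[OF T_root_divide_T_defect(1)] residue_rep_eq_0_iff T_root_divide_T_defect
  by (auto simp: add.commute)

lemma residue_form_eq_0_iff:
  assumes a: "a \<in> R"
  shows "residue_form a = 0 \<longleftrightarrow> a = 0 \<or> a = form_root"
proof -
  let ?q = "T_root / T_defect"
  have a0: "a \<in> frac_ideal 0"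
    using a R_integral by blast
  have aT: "a * T_defect \<in> frac_ideal n \<longleftrightarrow> a \<in> frac_ideal n" for n
    using frac_ideal_mult_unit_iff v_T_defect by blast
  have aq: "a - ?q \<in> frac_ideal 0"
    using frac_ideal_diff[OF a0 T_root_divide_T_defect(1)] .
  have "T_defect * a * a + T_root * a = (a * T_defect) * (a - ?q)"
    using v_T_defect by (simp add: algebra_simps)
  then have "residue_form a = 0 \<longleftrightarrow> (a * T_defect) * (a - ?q) \<in> frac_ideal 1"
    unfolding residue_form_def using residue_rep_eq_0_iff[OF form_integral[OF a0]] by simp
  also have "\<dots> \<longleftrightarrow> a \<in> frac_ideal 1 \<or> a - ?q \<in> frac_ideal 1"
  proof
    assume "(a * T_defect) * (a - ?q) \<in> frac_ideal 1"
    then show "a \<in> frac_ideal 1 \<or> a - ?q \<in> frac_ideal 1"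
      using frac_ideal_one_prime[OF _ aq] aT a0 by blast
  next
    assume "a \<in> frac_ideal 1 \<or> a - ?q \<in> frac_ideal 1"
    then show "(a * T_defect) * (a - ?q) \<in> frac_ideal 1"
      using frac_ideal_mult[of "a * T_defect" 1 "a - ?q" 0] frac_ideal_mult[of "a * T_defect" 0 "a - ?q" 1]
        aT aq a0 by auto
  qed
  also have "a - ?q \<in> frac_ideal 1 \<longleftrightarrow> a - form_root \<in> frac_ideal 1"
  proof -
    have "(form_root - ?q) + (a - ?q) = a - form_root"
      by (simp add: algebra_simps)
    then show ?thesis
      using frac_ideal_add_cancel_left[OF form_root(3), of "a - ?q"] by (simp only:)
  qed
  also have "a \<in> frac_ideal 1 \<longleftrightarrow> a = 0"
    using R_distinct[OF a zero_in_R] by auto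
  also have "a - form_root \<in> frac_ideal 1 \<longleftrightarrow> a = form_root"
    using R_distinct[OF a form_root(1)] by auto
  finally show ?thesis .
qed

lemma card_R_eq_twice_residue_form_image: "card R = 2 * card (residue_form ` R)"
proof -
  define F where "F y = {a \<in> R. residue_form a = y}" for y
  have fibre: "F (residue_form a) = {a, a + form_root}" if a: "a \<in> R" for a
  proof (intro equalityI subsetI)
    fix b assume "b \<in> F (residue_form a)"
    then have b: "b \<in> R" "residue_form b = residue_form a"
      by (auto simp: F_def)
    then have "residue_form (b + a) = 0"
      using residue_form_add[OF b(1) a] by simp
    then have "b + a = 0 \<or> b + a = form_root"
      using residue_form_eq_0_iff R_add_closed[OF b(1) a] by blast
    moreover have "b + a = form_root \<Longrightarrow> b = a + form_root"
      by (metis add_self_right add.commute)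
    ultimately show "b \<in> {a, a + form_root}"
      by auto
  next
    fix b assume "b \<in> {a, a + form_root}"
    then show "b \<in> F (residue_form a)"
      using residue_form_add[OF a form_root(1)] residue_form_eq_0_iff[OF form_root(1)]
        R_add_closed[OF a form_root(1)] a by (auto simp: F_def)
  qed
  have "R = (\<Union>y\<in>residue_form ` R. F y)"
    unfolding F_def by auto
  moreover have "card (\<Union>y\<in>residue_form ` R. F y) = (\<Sum>y\<in>residue_form ` R. card (F y))"
    by (rule card_UN_disjoint) (use finite_R in \<open>auto simp: F_def\<close>)
  ultimately have "card R = (\<Sum>y\<in>residue_form ` R. card (F y))"
    by simp
  also have "\<dots> = (\<Sum>y\<in>residue_form ` R. 2)"
    using fibre form_root(2) by (intro sum.cong) auto
  finally show ?thesis
    by simp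
qed

lemma residue_form_not_surj: "\<exists>c\<in>R. c \<notin> residue_form ` R"
proof (rule ccontr)
  assume "\<not> ?thesis"
  then have "residue_form ` R = R"
    using residue_form_in_R by blast
  then show False
    using card_R_eq_twice_residue_form_image finite_R zero_in_R by (simp add: card_gt_0_iff)
qed

lemma residue_form_complement_add:
  assumes c: "c \<in> R - residue_form ` R" and d: "d \<in> R - residue_form ` R"
  shows "c + d \<in> residue_form ` R"
proof -
  let ?S = "residue_form ` R"
  have S: "?S \<subseteq> R"
    using residue_form_in_R by blast
  have shift: "(+) c ` ?S \<subseteq> R - ?S"
  proof
    fix z assume "z \<in> (+) c ` ?S"
    then obtain b where b: "b \<in> R" "z = c + residue_form b"
      by blast
    have "z \<notin> ?S"
    proof
      assume "z \<in> ?S"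
      then obtain a where a: "a \<in> R" "z = residue_form a"
        by blast
      then have "c = residue_form (a + b)"
        using b residue_form_add by (metis add_self_left add.commute)
      then show False
        using c R_add_closed a(1) b(1) by blast
    qed
    then show "z \<in> R - ?S"
      using R_add_closed c residue_form_in_R b by auto
  qed
  have "card ((+) c ` ?S) = card (R - ?S)"
    using card_R_eq_twice_residue_form_image card_Diff_subset[OF finite_subset[OF S finite_R] S]
    by (simp add: card_image inj_on_def)
  then have "(+) c ` ?S = R - ?S"
    using card_subset_eq[OF _ shift] finite_R by blast
  then obtain y where "y \<in> ?S" "d = c + y"
    using d by blast
  then show ?thesis
    by simp
qed

lemma level_one_conic_value:
  assumes x: "x = T * u * u + Y * Y + Y" "x \<in> frac_ideal (- 1)" "x \<notin> frac_ideal 0"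
  shows "u \<noteq> 0" and "Y \<noteq> 0" and "v Y < 0"
proof -
  have vx: "v x = - 1"
    using x(2,3) by (auto simp: mem_frac_ideal)
  have Y: "Y \<notin> frac_ideal 0"
  proof
    assume Y: "Y \<in> frac_ideal 0"
    then have YY: "Y * Y + Y \<in> frac_ideal 0"
      using frac_ideal_mult[OF Y Y] frac_ideal_add by simp
    have "x = T * u * u + (Y * Y + Y)"
      by (simp add: x(1) add.assoc)
    then have "T * u * u = (Y * Y + Y) + x"
      by (metis add_self_left add.commute)
    then have "T * u * u \<notin> frac_ideal 0" "T * u * u \<in> frac_ideal (- 1)"
      using YY x(2,3) frac_ideal_antimono[OF YY, of "- 1"] by simp_all
    then have "u \<noteq> 0" "v (T * u * u) = - 1"
      by (auto simp: mem_frac_ideal)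
    moreover have "v (T * u * u) = 2 * v u"
      using calculation(1) v_mult T_nonzero v_T by (simp add: mult.assoc)
    ultimately show False
      by presburger
  qed
  then show Ynz: "Y \<noteq> 0" and vY: "v Y < 0"
    by (auto simp: mem_frac_ideal)
  show "u \<noteq> 0"
  proof
    assume "u = 0"
    then have "x = Y * Y + Y"
      using x(1) by simp
    moreover have "v (Y * Y) < v Y"
      using v_mult[OF Ynz Ynz] vY by simp
    ultimately have "v x = v (Y * Y)"
      using v_add_eq_left[of "Y * Y" Y] Ynz by simp
    then show False
      using v_mult[OF Ynz Ynz] vY vx by simp
  qed
qed

text \<open>Writing \<open>Y = s u\<close>, the summands \<open>(T - s\<^sup>2) u\<^sup>2\<close> and \<open>s u\<close> of \<open>x\<close> must have the valuations forced
  by \<open>v x = -1\<close> being odd.\<close>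
lemma level_one_conic_shape:
  assumes x: "x \<in> conic_group" "x \<in> frac_ideal (- 1)" "x \<notin> frac_ideal 0"
  obtains s u where "x = (T - s * s) * u * u + s * u" "s \<in> frac_ideal 0"
    "T - s * s \<in> frac_ideal 1" "u \<noteq> 0" "v u = - 1"
proof -
  obtain u Y where xuY: "x = T * u * u + Y * Y + Y"
    using x(1) unfolding conic_group_def by blast
  note uY = level_one_conic_value[OF xuY x(2,3)]
  define s where "s = Y / u"
  have Ys: "Y = s * u" and snz: "s \<noteq> 0"
    using uY by (auto simp: s_def)
  define P where "P = (T - s * s) * u * u"
  have xP: "x = P + Y"
    unfolding xuY P_def Ys by (simp add: algebra_simps)
  have Pnz: "P \<noteq> 0"
    using T_not_square[of s] uY by (simp add: P_def)
  have vP: "v P = v (T - s * s) + 2 * v u"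
    using v_mult T_not_square[of s] uY by (simp add: P_def mult.assoc)
  have vY: "v Y = v s + v u"
    using v_mult snz uY Ys by simp
  have "v P \<noteq> v Y \<Longrightarrow> v x = min (v P) (v Y)"
    using v_add_eq_min[OF Pnz uY(2)] xP by simp
  moreover have "v x = - 1"
    using x(2,3) by (auto simp: mem_frac_ideal)
  ultimately have "v s = 0 \<and> v u = - 1 \<and> v (T - s * s) = 1"
    using vP vY v_T_minus_square[of s] snz uY(3)
    by (cases "v s < 0"; cases "v P = v Y") (auto split: if_splits simp: min_def)
  then show ?thesis
    using that[of s u] xP uY(1) Ys T_not_square[of s]
    by (auto simp: P_def mem_frac_ideal algebra_simps)
qed

lemma level_one_conic_residue:
  assumes x: "x \<in> conic_group" "x \<in> frac_ideal (- 1)"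
  shows "residue_rep (\<pi> * x) \<in> residue_form ` R"
proof (cases "x \<in> frac_ideal 0")
  case True
  then have "\<pi> * x \<in> frac_ideal 1"
    using pi_mult_mem_frac_ideal_iff[of x 0] by simp
  then have "residue_rep (\<pi> * x) = 0"
    using residue_rep_eq_0_iff frac_ideal_antimono by simp
  moreover have "residue_form 0 = 0"
    using residue_rep_R[OF zero_in_R] by (simp add: residue_form_def)
  ultimately show ?thesis
    using zero_in_R by (metis image_eqI)
next
  case False
  obtain s u where su: "x = (T - s * s) * u * u + s * u" "s \<in> frac_ideal 0"
    "T - s * s \<in> frac_ideal 1" "u \<noteq> 0" "v u = - 1"
    using level_one_conic_shape[OF x False] by blast
  define e where "e = \<pi> * u"
  define h where "h = (T - s * s) / \<pi>"
  define e' where "e' = residue_rep e"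
  have e: "e \<in> frac_ideal 0"
    using su(4,5) v_mult[OF pi_nonzero su(4)] v_pi pi_nonzero by (simp add: e_def mem_frac_ideal)
  then have e': "e' \<in> R" "e - e' \<in> frac_ideal 1"
    using residue_rep[OF e] by (auto simp: e'_def)
  have pix: "\<pi> * x = h * e * e + s * e"
    unfolding su(1) h_def e_def using pi_nonzero by (simp add: field_simps)
  have h: "h - T_defect \<in> frac_ideal 1" and s: "s - T_root \<in> frac_ideal 1"
    using T_root_T_defect_unique[OF su(3)] by (simp_all add: h_def)
  have "T_defect \<in> frac_ideal 0"
    using v_T_defect by (simp add: mem_frac_ideal)
  moreover have "h - T_defect \<in> frac_ideal 0"
    using h frac_ideal_subset[of 0 1] by auto
  ultimately have "(h - T_defect) + T_defect \<in> frac_ideal 0"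
    by (intro frac_ideal_add)
  then have "h \<in> frac_ideal 0"
    by simp
  then have "\<pi> * x - (T_defect * e' * e' + T_root * e') \<in> frac_ideal 1"
    unfolding pix using e' R_integral su(2) e h s by (intro frac_ideal_quadratic_cong) auto
  moreover have "\<pi> * x \<in> frac_ideal 0"
    using pi_mult_mem_frac_ideal_iff[of x "- 1"] x(2) by simp
  ultimately have "residue_rep (\<pi> * x) = residue_form e'"
    unfolding residue_form_def using residue_rep_eq_iff form_integral e'(1) R_integral by blast
  then show ?thesis
    using e'(1) by blast
qed

lemma level_one_conic_iff:
  assumes x: "x \<in> frac_ideal (- 1)"
  shows "x \<in> conic_group \<longleftrightarrow> residue_rep (\<pi> * x) \<in> residue_form ` R"
proof
  assume "residue_rep (\<pi> * x) \<in> residue_form ` R"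
  then obtain e where e: "e \<in> R" "residue_rep (\<pi> * x) = residue_form e"
    by blast
  have pix: "\<pi> * x \<in> frac_ideal 0"
    using pi_mult_mem_frac_ideal_iff[of x "- 1"] x by simp
  have d: "\<pi> * x - (T_defect * e * e + T_root * e) \<in> frac_ideal 1"
    using e(2) residue_rep_eq_iff[OF pix form_integral] e(1) R_integral
    unfolding residue_form_def by blast
  define u where "u = e / \<pi>"
  define g where "g = T * u * u + (T_root * u) * (T_root * u) + T_root * u"
  have "g \<in> conic_group"
    unfolding g_def by (rule conic_groupI)
  have "g = T_defect * \<pi> * u * u + T_root * u"
    using T_defect_times_pi by (simp add: g_def algebra_simps)
  then have "x - g = (\<pi> * x - (T_defect * e * e + T_root * e)) / \<pi>"
    using pi_nonzero by (simp add: u_def field_simps)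
  then have "x - g \<in> conic_group"
    using frac_ideal_divide_pi_power_iff[of _ 1 1] d integral_subset_conic_group by auto
  then show "x \<in> conic_group"
    using conic_group_add[OF _ \<open>g \<in> conic_group\<close>] by fastforce
qed (use level_one_conic_residue x in blast)

lemma exists_level_one_not_in_conic_group: "\<exists>x. x \<in> frac_ideal (- 1) \<and> x \<notin> conic_group"
proof -
  obtain c where c: "c \<in> R" "c \<notin> residue_form ` R"
    using residue_form_not_surj by blast
  define x where "x = c / \<pi>"
  have x: "x \<in> frac_ideal (- 1)"
    using frac_ideal_divide_pi_power_iff[of c 1 0] c(1) R_integral by (auto simp: x_def)
  moreover have "residue_rep (\<pi> * x) = c"
    using residue_rep_R[OF c(1)] pi_nonzero by (simp add: x_def)
  ultimately show ?thesis
    using level_one_conic_iff c(2) by auto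
qed

lemma level_one_not_in_conic_group_add:
  assumes "x \<in> frac_ideal (- 1)" "x \<notin> conic_group" "y \<in> frac_ideal (- 1)" "y \<notin> conic_group"
  shows "x + y \<in> conic_group"
proof -
  have O: "\<pi> * x \<in> frac_ideal 0" "\<pi> * y \<in> frac_ideal 0"
    using pi_mult_mem_frac_ideal_iff[of _ "- 1"] assms(1,3) by simp_all
  have "residue_rep (\<pi> * (x + y)) = residue_rep (\<pi> * x) + residue_rep (\<pi> * y)"
    using residue_rep_add[OF O] by (simp add: distrib_left)
  also have "\<dots> \<in> residue_form ` R"
    using residue_form_complement_add residue_rep O level_one_conic_iff assms by auto
  finally show ?thesis
    using level_one_conic_iff frac_ideal_add assms(1,3) by blast
qed

lemma conic_group_index_two:
  assumes k: "1 \<le> k" and x0: "x0 \<in> frac_ideal (- 1)" "x0 \<notin> conic_group"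
  defines "H \<equiv> conic_group \<inter> frac_ideal (- int k)"
  shows "frac_ideal (- int k) = H \<union> (+) x0 ` H" and "H \<inter> (+) x0 ` H = {}"
proof -
  have x0k: "x0 \<in> frac_ideal (- int k)"
    using frac_ideal_antimono[OF x0(1)] k by simp
  have "y \<in> H \<union> (+) x0 ` H" if y: "y \<in> frac_ideal (- int k)" "y \<notin> conic_group" for y
  proof -
    obtain g where g: "g \<in> conic_group" "y - g \<in> frac_ideal (- 1)"
      using conic_group_approx[OF y(1)] by blast
    have "y - g \<notin> conic_group"
      using g(1) y(2) by (simp add: add.commute)
    then have "(y - g) + x0 \<in> conic_group"
      using level_one_not_in_conic_group_add g(2) x0 by blast
    then have "x0 + y \<in> conic_group"
      using conic_group_add[OF _ g(1)] by (fastforce simp: algebra_simps)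
    moreover have "y = x0 + (x0 + y)"
      by simp
    ultimately show ?thesis
      using y(1) x0k frac_ideal_add unfolding H_def by blast
  qed
  then show "frac_ideal (- int k) = H \<union> (+) x0 ` H"
    using x0k frac_ideal_add unfolding H_def by auto
  show "H \<inter> (+) x0 ` H = {}"
  proof (rule ccontr)
    assume "H \<inter> (+) x0 ` H \<noteq> {}"
    then obtain z where "z \<in> conic_group" "x0 + z \<in> conic_group"
      unfolding H_def by blast
    then have "(x0 + z) + z \<in> conic_group"
      using conic_group_add by blast
    then show False
      using x0(2) by simp
  qed
qed

end

section \<open>Measures of the shells\<close>

locale conic_measure = conic_setting v \<pi> R T + haar_residue_system v \<pi> R mu
  for v :: "'a::field \<Rightarrow> int" and \<pi> R T mu
begin

lemma conic_group_level_integral_stable: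
  assumes "x \<in> conic_group \<inter> frac_ideal (- int k)" and "z \<in> frac_ideal 0"
  shows "x + z \<in> conic_group \<inter> frac_ideal (- int k)"
proof -
  have "z \<in> conic_group"
    using assms(2) integral_subset_conic_group by blast
  moreover have "z \<in> frac_ideal (- int k)"
    using assms(2) frac_ideal_subset[of "- int k" 0] by auto
  ultimately show ?thesis
    using assms(1) conic_group_add[of x z] frac_ideal_add[of x _ z] by simp
qed

lemma sets_conic_group_level: "conic_group \<inter> frac_ideal (- int k) \<in> sets mu"
proof (rule sets_bounded_integral_stable)
  fix x z
  assume "x \<in> conic_group \<inter> frac_ideal (- int k)" "z \<in> frac_ideal 0"
  then show "x + z \<in> conic_group \<inter> frac_ideal (- int k)"
    by (rule conic_group_level_integral_stable)
qed blast

lemma emeasure_conic_group_level_finite: "emeasure mu (conic_group \<inter> frac_ideal (- int k)) \<noteq> \<infinity>"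
  by (rule emeasure_bounded_finite) blast

lemma measure_conic_group_level:
  assumes "1 \<le> k"
  shows "measure mu (conic_group \<inter> frac_ideal (- int k)) = real (card R) ^ k / 2"
proof -
  obtain x0 where "x0 \<in> frac_ideal (- 1)" "x0 \<notin> conic_group"
    using exists_level_one_not_in_conic_group by blast
  note index_two = conic_group_index_two[OF assms this]
  show ?thesis
  proof (rule measure_index_two[of _ k x0])
    fix x z
    assume "x \<in> conic_group \<inter> frac_ideal (- int k)" "z \<in> frac_ideal 0"
    then show "x + z \<in> conic_group \<inter> frac_ideal (- int k)"
      by (rule conic_group_level_integral_stable)
  qed (use index_two in auto)
qed

lemma measure_conic_group_level_0: "measure mu (conic_group \<inter> frac_ideal 0) = 1"
  using integral_subset_conic_group measure_frac_ideal[of 0] by (simp add: Int_absorb1)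

lemma shell_eq:
  assumes "1 \<le> k"
  shows "{y. y \<noteq> 0 \<and> v y = - int k} = frac_ideal (- int k) - frac_ideal (- int (k - 1))"
proof -
  have "- int (k - 1) = - int k + 1"
    using assms by simp
  then show ?thesis
    by (auto simp: mem_frac_ideal)
qed

lemma conic_shell_eq:
  assumes "1 \<le> k"
  shows "{y. y \<noteq> 0 \<and> v y = - int k \<and> conic_has_point T y} =
    conic_group \<inter> frac_ideal (- int k) - conic_group \<inter> frac_ideal (- int (k - 1))"
  using shell_eq[OF assms] by (auto simp: conic_has_point_iff)

lemma measure_shell:
  assumes "1 \<le> k"
  shows "measure mu {y. y \<noteq> 0 \<and> v y = - int k} = real (card R) ^ k - real (card R) ^ (k - 1)"
proof -
  have "measure mu (frac_ideal (- int k) - frac_ideal (- int (k - 1))) =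
      measure mu (frac_ideal (- int k)) - measure mu (frac_ideal (- int (k - 1)))"
    by (rule measure_Diff) (simp_all add: emeasure_frac_ideal sets_frac_ideal frac_ideal_subset)
  then show ?thesis
    using shell_eq[OF assms] by (simp add: measure_frac_ideal)
qed

lemma measure_conic_shell:
  assumes "1 \<le> k"
  shows "measure mu {y. y \<noteq> 0 \<and> v y = - int k \<and> conic_has_point T y} =
    measure mu (conic_group \<inter> frac_ideal (- int k)) -
    measure mu (conic_group \<inter> frac_ideal (- int (k - 1)))"
  unfolding conic_shell_eq[OF assms]
  using frac_ideal_subset[of "- int k" "- int (k - 1)"]
  by (intro measure_Diff emeasure_conic_group_level_finite sets_conic_group_level) auto

lemma measure_conic_shell_ge_2:
  assumes "2 \<le> k"
  shows "measure mu {y. y \<noteq> 0 \<and> v y = - int k \<and> conic_has_point T y} =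
    (real (card R) ^ k - real (card R) ^ (k - 1)) / 2"
  using assms measure_conic_shell[of k] measure_conic_group_level[of k]
    measure_conic_group_level[of "k - 1"] by (simp add: diff_divide_distrib)

lemma measure_conic_shell_1:
  "measure mu {y. y \<noteq> 0 \<and> v y = - 1 \<and> conic_has_point T y} = real (card R) / 2 - 1"
  using measure_conic_shell[of 1] measure_conic_group_level[of 1] measure_conic_group_level_0
  by simp

lemma measure_nonconic_shell:
  assumes "1 \<le> k"
  shows "measure mu {y. y \<noteq> 0 \<and> v y = - int k \<and> \<not> conic_has_point T y} =
    measure mu {y. y \<noteq> 0 \<and> v y = - int k} -
    measure mu {y. y \<noteq> 0 \<and> v y = - int k \<and> conic_has_point T y}"
proof -
  let ?S = "{y. y \<noteq> 0 \<and> v y = - int k}"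
  let ?A = "{y. y \<noteq> 0 \<and> v y = - int k \<and> conic_has_point T y}"
  have "?S \<in> sets mu"
    unfolding shell_eq[OF assms] using sets_frac_ideal by blast
  moreover have "?A \<in> sets mu"
    unfolding conic_shell_eq[OF assms] using sets_conic_group_level by blast
  moreover have "emeasure mu ?S \<noteq> \<infinity>"
    by (rule emeasure_bounded_finite[of _ k]) (auto simp: mem_frac_ideal)
  moreover have "{y. y \<noteq> 0 \<and> v y = - int k \<and> \<not> conic_has_point T y} = ?S - ?A"
    by auto
  ultimately show ?thesis
    by (simp add: measure_Diff subset_iff)
qed

lemma measure_conic_shell_half:
  assumes "2 \<le> k"
  shows "measure mu {y. y \<noteq> 0 \<and> v y = - int k \<and> conic_has_point T y} =
      measure mu {y. y \<noteq> 0 \<and> v y = - int k \<and> \<not> conic_has_point T y}"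
    and "measure mu {y. y \<noteq> 0 \<and> v y = - int k \<and> \<not> conic_has_point T y} =
      1 / 2 * measure mu {y. y \<noteq> 0 \<and> v y = - int k}"
  using measure_nonconic_shell[of k] measure_shell[of k] measure_conic_shell_ge_2[OF assms] assms
  by (simp_all add: field_simps)

end

section \<open>The completion of \<open>F\<^sub>2(t)\<close> at \<open>\<omega>\<close>\<close>

lemma bool_mod_ring_cases: "(x::bool mod_ring) = 0 \<or> x = 1"
  by transfer auto

lemma bool_mod_ring_one_add_one: "(1::bool mod_ring) + 1 = 0"
  by transfer simp

lemma bool_mod_ring_poly_add_self: "(p::bool mod_ring poly) + p = 0"
proof -
  have "(c::bool mod_ring) + c = 0" for c
    by transfer auto
  then show ?thesis
    by (intro poly_eqI) (simp only: coeff_add coeff_0)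
qed

lemma card_degree_less:
  assumes "0 < n"
  shows "card {p :: 'a::{zero, finite} poly. degree p < n} = CARD('a) ^ n"
proof -
  let ?L = "{xs :: 'a list. set xs \<subseteq> UNIV \<and> length xs = n}"
  have coeff_Poly: "Polynomial.coeff (Poly xs) i = xs ! i" if "i < length xs" for xs :: "'a list" and i
    using that by (simp add: nth_default_def)
  have "inj_on Poly ?L"
  proof (rule inj_onI)
    fix xs ys :: "'a list"
    assume "xs \<in> ?L" "ys \<in> ?L" "Poly xs = Poly ys"
    then show "xs = ys"
      using coeff_Poly[of _ xs] coeff_Poly[of _ ys] by (intro nth_equalityI) auto
  qed
  moreover have "Poly ` ?L = {p. degree p < n}"
  proof (intro equalityI subsetI)
    fix p assume "p \<in> Poly ` ?L"
    then obtain xs where xs: "length xs = n" "p = Poly xs"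
      by blast
    have "degree p \<le> n - 1"
      unfolding xs(2) by (rule degree_le) (use xs(1) in \<open>auto simp: nth_default_def\<close>)
    then show "p \<in> {p. degree p < n}"
      using assms by simp
  next
    fix p :: "'a poly" assume "p \<in> {p. degree p < n}"
    then have "p = Poly (map (Polynomial.coeff p) [0..<n])"
      by (intro poly_eqI) (auto simp: nth_default_def coeff_eq_0)
    then show "p \<in> Poly ` ?L"
      by (intro image_eqI[of _ _ "map (Polynomial.coeff p) [0..<n]"]) auto
  qed
  ultimately have "card {p :: 'a poly. degree p < n} = card ?L"
    by (metis card_image)
  then show ?thesis
    using card_lists_length_eq[of "UNIV :: 'a set" n] by simp
qed

lemma f2_embedding_hom:
  assumes "(1::'a::field) + 1 = 0"
  shows "comm_ring_hom (\<lambda>c::bool mod_ring. if c = 0 then (0::'a) else 1)"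
proof
  fix x y :: "bool mod_ring"
  show "(if x + y = 0 then (0::'a) else 1) = (if x = 0 then 0 else 1) + (if y = 0 then 0 else 1)"
    using bool_mod_ring_cases[of x] bool_mod_ring_cases[of y] bool_mod_ring_one_add_one assms
    by auto
  show "(if x * y = 0 then (0::'a) else 1) = (if x = 0 then 0 else 1) * (if y = 0 then 0 else 1)"
    using bool_mod_ring_cases[of x] bool_mod_ring_cases[of y] by auto
qed auto

locale F2t_completion =
  fixes w :: "bool mod_ring poly" and T :: "'a::field" and v :: "'a \<Rightarrow> int"
  assumes w_irreducible: "irreducible w" and w_monic: "lead_coeff w = 1"
    and w_not_t: "w \<noteq> [:0, 1:]" and completion: "is_completion_at w T v"
begin

lemma char_two: "(1::'a) + 1 = 0"
  using completion by (simp add: is_completion_at_def)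

sublocale nonarch_valued_field v
  using completion by unfold_locales (auto simp: is_completion_at_def)

lemma
  shows f2_eval_add: "f2_eval (p + q) T = f2_eval p T + f2_eval q T"
    and f2_eval_mult: "f2_eval (p * q) T = f2_eval p T * f2_eval q T"
    and f2_eval_diff: "f2_eval (p - q) T = f2_eval p T - f2_eval q T"
    and f2_eval_0: "f2_eval 0 T = 0"
    and f2_eval_1: "f2_eval 1 T = 1"
    and f2_eval_t: "f2_eval [:0, 1:] T = T"
proof -
  interpret embedding: comm_ring_hom "\<lambda>c::bool mod_ring. if c = 0 then (0::'a) else 1"
    by (rule f2_embedding_hom[OF char_two])
  interpret map: map_poly_comm_ring_hom "\<lambda>c::bool mod_ring. if c = 0 then (0::'a) else 1" ..
  show "f2_eval (p + q) T = f2_eval p T + f2_eval q T"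
    "f2_eval (p * q) T = f2_eval p T * f2_eval q T"
    "f2_eval (p - q) T = f2_eval p T - f2_eval q T"
    "f2_eval 0 T = 0" "f2_eval 1 T = 1" "f2_eval [:0, 1:] T = T"
    unfolding f2_eval_def by (simp_all add: map.hom_add map.hom_mult map.hom_minus)
qed

lemma f2_eval_nonzero: "p \<noteq> 0 \<Longrightarrow> f2_eval p T \<noteq> 0"
  using completion by (simp add: is_completion_at_def)

lemma v_f2_eval: "p \<noteq> 0 \<Longrightarrow> v (f2_eval p T) = int (multiplicity w p)"
  using completion by (simp add: is_completion_at_def)

lemma cauchy_convergent:
  fixes s :: "nat \<Rightarrow> 'a"
  assumes "\<forall>n. \<exists>N. \<forall>i\<ge>N. \<forall>j\<ge>N. s i - s j \<in> frac_ideal n"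
  shows "\<exists>l. \<forall>n. \<exists>N. \<forall>i\<ge>N. s i - l \<in> frac_ideal n"
proof -
  have "\<forall>s::nat \<Rightarrow> 'a. (\<forall>n. \<exists>N. \<forall>i\<ge>N. \<forall>j\<ge>N. s i = s j \<or> v (s i - s j) \<ge> n) \<longrightarrow>
      (\<exists>l. \<forall>n. \<exists>N. \<forall>i\<ge>N. s i = l \<or> v (s i - l) \<ge> n)"
    using completion by (simp add: is_completion_at_def)
  from this[rule_format, of s] show ?thesis
    using assms by (simp add: mem_frac_ideal)
qed

lemma fractions_dense: "\<exists>p q. q \<noteq> 0 \<and> y - f2_eval p T / f2_eval q T \<in> frac_ideal n"
proof -
  have "\<forall>y (n::int). \<exists>p q. q \<noteq> 0 \<and>
      (y = f2_eval p T / f2_eval q T \<or> v (y - f2_eval p T / f2_eval q T) \<ge> n)"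
    using completion by (simp add: is_completion_at_def)
  then show ?thesis
    by (simp add: mem_frac_ideal)
qed

lemma w_nonzero: "w \<noteq> 0" and w_not_unit: "\<not> is_unit w"
  using w_irreducible by (auto simp: irreducible_def)

lemma degree_w_pos: "0 < degree w"
  using w_nonzero w_not_unit is_unit_iff_degree[OF w_nonzero] by simp

lemma f2_eval_integral: "f2_eval p T \<in> frac_ideal 0"
  by (cases "p = 0") (auto simp: mem_frac_ideal f2_eval_0 v_f2_eval)

lemma f2_eval_mem_frac_ideal_1_iff: "f2_eval p T \<in> frac_ideal 1 \<longleftrightarrow> w dvd p"
proof (cases "p = 0")
  case False
  have "1 \<le> multiplicity w p \<longleftrightarrow> w dvd p"
    using multiplicity_geI[OF False w_not_unit, of 1] not_dvd_imp_multiplicity_0[of w p] by fastforce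
  then show ?thesis
    using False f2_eval_nonzero v_f2_eval by (simp add: mem_frac_ideal)
qed (simp add: f2_eval_0)

lemma f2_eval_unit: "\<not> w dvd p \<Longrightarrow> f2_eval p T \<noteq> 0 \<and> v (f2_eval p T) = 0"
  using f2_eval_integral[of p] f2_eval_mem_frac_ideal_1_iff[of p] by (auto simp: mem_frac_ideal)

lemma w_not_dvd_t: "\<not> w dvd [:0, 1:]"
proof
  assume "w dvd [:0, 1:]"
  then obtain g where g: "[:0, 1:] = w * g"
    by (rule dvdE)
  then have "g \<noteq> 0"
    by auto
  have "degree (w * g) = 1"
    using g[symmetric] by simp
  then have "degree w + degree g = 1"
    using degree_mult_eq[OF w_nonzero \<open>g \<noteq> 0\<close>] by simp
  then have "degree g = 0"
    using degree_w_pos by linarith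
  then obtain c where c: "g = [:c:]"
    by (rule degree_eq_zeroE)
  have "lead_coeff g = lead_coeff (w * g)"
    using lead_coeff_mult[of w g] w_monic by simp
  also have "\<dots> = 1"
    using g[symmetric] by simp
  finally have "lead_coeff g = 1" .
  then have "g = 1"
    using c by (simp add: one_pCons)
  then show False
    using g w_not_t by simp
qed

lemma T_unit: "T \<noteq> 0 \<and> v T = 0"
  using f2_eval_unit[OF w_not_dvd_t] f2_eval_t by simp

lemma v_f2_eval_w: "f2_eval w T \<noteq> 0 \<and> v (f2_eval w T) = 1"
  using f2_eval_nonzero[OF w_nonzero] v_f2_eval[OF w_nonzero] multiplicity_self[OF w_nonzero w_not_unit]
  by simp

text \<open>Bezout: modulo \<open>w\<close>, the denominator \<open>q\<close> has a polynomial inverse \<open>t\<close>.\<close>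
lemma f2_eval_coprime_fraction_cong:
  assumes "\<not> w dvd q"
  shows "\<exists>r. f2_eval p T / f2_eval q T - f2_eval r T \<in> frac_ideal 1"
proof -
  have "coprime w q"
    by (rule prime_elem_imp_coprime[OF irreducible_imp_prime_elem[OF w_irreducible] assms])
  define s where "s = fst (bezout_coefficients w q)"
  define t where "t = snd (bezout_coefficients w q)"
  have st: "s * w + t * q = 1"
    using bezout_coefficients_fst_snd[of w q] coprime_imp_gcd_eq_1[OF \<open>coprime w q\<close>]
    by (simp add: s_def t_def)
  have Q: "f2_eval q T \<noteq> 0" "v (f2_eval q T) = 0"
    using f2_eval_unit[OF assms] by auto
  have "f2_eval s T * f2_eval w T + f2_eval t T * f2_eval q T = 1"
    using arg_cong[OF st, of "\<lambda>p. f2_eval p T"] by (simp add: f2_eval_add f2_eval_mult f2_eval_1)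
  then have st': "1 - f2_eval t T * f2_eval q T = f2_eval s T * f2_eval w T"
    by (simp add: algebra_simps)
  have "f2_eval p T / f2_eval q T - f2_eval (p * t) T =
      f2_eval p T * (1 - f2_eval t T * f2_eval q T) / f2_eval q T"
    using Q(1) by (simp add: f2_eval_mult field_simps)
  also have "\<dots> = f2_eval (p * s * w) T / f2_eval q T"
    unfolding st' by (simp add: f2_eval_mult mult.assoc)
  finally have "f2_eval p T / f2_eval q T - f2_eval (p * t) T = f2_eval (p * s * w) T / f2_eval q T" .
  moreover have "f2_eval (p * s * w) T \<in> frac_ideal 1"
    by (simp add: f2_eval_mem_frac_ideal_1_iff)
  ultimately have "f2_eval p T / f2_eval q T - f2_eval (p * t) T \<in> frac_ideal 1"
    using frac_ideal_divide_unit_iff[OF Q] by simp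
  then show ?thesis
    by blast
qed

lemma f2_eval_fraction_cong:
  assumes q: "q \<noteq> 0" and z: "f2_eval p T / f2_eval q T \<in> frac_ideal 0"
  shows "\<exists>r. f2_eval p T / f2_eval q T - f2_eval r T \<in> frac_ideal 1"
proof (cases "p = 0")
  case True
  then show ?thesis
    by (intro exI[of _ 0]) (simp add: f2_eval_0)
next
  case False
  define m where "m = multiplicity w q"
  obtain q' where q': "q = w ^ m * q'" "\<not> w dvd q'"
    unfolding m_def by (rule multiplicity_decompose'[OF q w_not_unit])
  have "v (f2_eval p T / f2_eval q T) = int (multiplicity w p) - int m"
    using f2_eval_nonzero[OF False] f2_eval_nonzero[OF q] v_inverse
    by (simp add: divide_inverse v_mult v_f2_eval[OF False] v_f2_eval[OF q] m_def)
  then have "m \<le> multiplicity w p"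
    using z f2_eval_nonzero[OF False] f2_eval_nonzero[OF q] by (simp add: mem_frac_ideal)
  then have "w ^ m dvd p"
    by (rule multiplicity_dvd')
  then obtain p' where p': "p = w ^ m * p'"
    by (rule dvdE)
  have "f2_eval (w ^ m) T \<noteq> 0"
    using f2_eval_nonzero w_nonzero by simp
  then have "f2_eval p T / f2_eval q T = f2_eval p' T / f2_eval q' T"
    by (simp add: p' q' f2_eval_mult)
  then show ?thesis
    using f2_eval_coprime_fraction_cong[OF q'(2)] by simp
qed

lemma integral_cong_f2_eval:
  assumes x: "x \<in> frac_ideal 0"
  shows "\<exists>r. x - f2_eval r T \<in> frac_ideal 1"
proof -
  obtain p q where q: "q \<noteq> 0" and pq: "x - f2_eval p T / f2_eval q T \<in> frac_ideal 1"
    using fractions_dense by blast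
  have "f2_eval p T / f2_eval q T \<in> frac_ideal 0"
    using frac_ideal_diff[OF x frac_ideal_antimono[OF pq]] by simp
  then obtain r where r: "f2_eval p T / f2_eval q T - f2_eval r T \<in> frac_ideal 1"
    using f2_eval_fraction_cong[OF q] by blast
  have "(x - f2_eval p T / f2_eval q T) + (f2_eval p T / f2_eval q T - f2_eval r T) \<in> frac_ideal 1"
    using pq r by (rule frac_ideal_add)
  then show ?thesis
    by (intro exI[of _ r]) simp
qed

definition residues :: "'a set" where
  "residues = (\<lambda>p. f2_eval p T) ` {p. degree p < degree w}"

lemma f2_eval_mod: "f2_eval p T - f2_eval (p mod w) T \<in> frac_ideal 1"
proof -
  have "f2_eval p T - f2_eval (p mod w) T = f2_eval (w * (p div w)) T"
    by (simp add: f2_eval_diff[symmetric] minus_mod_eq_mult_div)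
  then show ?thesis
    using f2_eval_mem_frac_ideal_1_iff by simp
qed

lemma residues_cover: "x \<in> frac_ideal 0 \<Longrightarrow> \<exists>r\<in>residues. x - r \<in> frac_ideal 1"
proof -
  assume "x \<in> frac_ideal 0"
  then obtain p where p: "x - f2_eval p T \<in> frac_ideal 1"
    using integral_cong_f2_eval by blast
  have "x - f2_eval (p mod w) T = (x - f2_eval p T) + (f2_eval p T - f2_eval (p mod w) T)"
    by simp
  then have "x - f2_eval (p mod w) T \<in> frac_ideal 1"
    using frac_ideal_add[OF p f2_eval_mod[of p]] by (simp only:)
  moreover have "f2_eval (p mod w) T \<in> residues"
    unfolding residues_def using degree_mod_less[OF w_nonzero, of p] degree_w_pos by auto
  ultimately show ?thesis
    by blast
qed

lemma residues_distinct:
  assumes "p \<in> {p. degree p < degree w}" "q \<in> {p. degree p < degree w}"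
    and "f2_eval p T - f2_eval q T \<in> frac_ideal 1"
  shows "p = q"
proof -
  have "w dvd p - q"
    using assms(3) f2_eval_mem_frac_ideal_1_iff[of "p - q"] by (simp add: f2_eval_diff)
  moreover have "degree (p - q) < degree w"
    using assms(1,2) degree_diff_le_max[of p q] by auto
  ultimately show ?thesis
    using dvd_imp_degree_le[of w "p - q"] by fastforce
qed

lemma card_residues: "card residues = 2 ^ degree w"
proof -
  have "inj_on (\<lambda>p. f2_eval p T) {p. degree p < degree w}"
    by (rule inj_onI) (use residues_distinct in simp)
  moreover have "card {p :: bool mod_ring poly. degree p < degree w} = 2 ^ degree w"
    using card_degree_less[where 'a = "bool mod_ring", OF degree_w_pos] by simp
  ultimately show ?thesis
    unfolding residues_def by (simp add: card_image)
qed

text \<open>The formal derivative of \<open>t - p\<^sup>2\<close> is \<open>1\<close>, so \<open>t - p\<^sup>2\<close> is not divisible by \<open>w\<^sup>2\<close>.\<close>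
lemma T_nonsquare_mod: "r \<in> residues \<Longrightarrow> T - r * r \<notin> frac_ideal 2"
proof -
  assume "r \<in> residues"
  then obtain p where r: "r = f2_eval p T"
    unfolding residues_def by blast
  define P where "P = [:0, 1:] - p * p"
  have "pderiv (p * p) = p * pderiv p + p * pderiv p"
    by (simp add: pderiv_mult)
  then have "pderiv P = 1"
    by (simp add: P_def pderiv_diff pderiv_pCons bool_mod_ring_poly_add_self)
  have "\<not> w ^ 2 dvd P"
  proof
    assume "w ^ 2 dvd P"
    then obtain g where "P = w ^ 2 * g"
      by (rule dvdE)
    then have "P = w * (w * g)"
      by (simp add: power2_eq_square mult.assoc)
    then have "w dvd pderiv P"
      by (simp add: pderiv_mult)
    then show False
      using \<open>pderiv P = 1\<close> w_not_unit by simp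
  qed
  then have "P \<noteq> 0" "multiplicity w P < 2"
    using multiplicity_dvd'[of 2 w P] by (auto simp: not_less[symmetric])
  moreover have "f2_eval P T = T - r * r"
    by (simp add: P_def r f2_eval_diff f2_eval_mult f2_eval_t)
  ultimately show ?thesis
    using f2_eval_nonzero[of P] v_f2_eval[of P] by (simp add: mem_frac_ideal)
qed

lemma conic_setting: "conic_setting v (f2_eval w T) residues T"
proof (intro conic_setting.intro residue_system.intro conic_setting_axioms.intro
    residue_system_axioms.intro nonarch_valued_field_axioms)
  show "residues \<subseteq> frac_ideal 0"
    unfolding residues_def using f2_eval_integral by blast
  show "0 \<in> residues"
    unfolding residues_def using f2_eval_0 degree_w_pos by (auto intro!: image_eqI[of _ _ 0])
  show "r + s \<in> residues" if rs: "r \<in> residues" "s \<in> residues" for r s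
  proof -
    obtain p q where "r = f2_eval p T" "s = f2_eval q T" "degree p < degree w" "degree q < degree w"
      using rs unfolding residues_def by blast
    then have "r + s = f2_eval (p + q) T" "degree (p + q) < degree w"
      using degree_add_le_max[of p q] by (auto simp: f2_eval_add)
    then show ?thesis
      unfolding residues_def by blast
  qed
  show "r = s" if "r \<in> residues" "s \<in> residues" "r - s \<in> frac_ideal 1" for r s
    using that residues_distinct unfolding residues_def by blast
  show "finite residues"
    using card_residues by (intro card_ge_0_finite) simp
  show "\<exists>l. \<forall>n. \<exists>N. \<forall>i\<ge>N. s i - l \<in> frac_ideal n"
    if "\<forall>n. \<exists>N. \<forall>i\<ge>N. \<forall>j\<ge>N. s i - s j \<in> frac_ideal n" for s :: "nat \<Rightarrow> 'a"
    using that by (rule cauchy_convergent)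
  show "x \<in> frac_ideal 0 \<Longrightarrow> \<exists>r\<in>residues. x - r \<in> frac_ideal 1" for x
    by (rule residues_cover)
  show "r \<in> residues \<Longrightarrow> T - r * r \<notin> frac_ideal 2" for r
    by (rule T_nonsquare_mod)
qed (use char_two T_unit v_f2_eval_w in simp_all)

end
lemma power_diff_power_pred:
  assumes "0 < k" and "(q::'a::field) \<noteq> 0"
  shows "q ^ k - q ^ (k - 1) = q ^ k * (1 - 1 / q)"
  using assms by (cases k) (simp_all add: field_simps)

theorem lemma3p5:
  fixes w :: "bool mod_ring poly" and T :: "'a::field" and v :: "'a \<Rightarrow> int" and mu :: "'a measure"
  assumes "irreducible w" and "lead_coeff w = 1" and "w \<noteq> [:0, 1:]"
    and "is_completion_at w T v" and "is_haar v mu"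
  shows "(\<forall>k::nat. k > 1 \<longrightarrow>
            measure mu {y. y \<noteq> 0 \<and> v y = - int k \<and> conic_has_point T y}
              = measure mu {y. y \<noteq> 0 \<and> v y = - int k \<and> \<not> conic_has_point T y} \<and>
            measure mu {y. y \<noteq> 0 \<and> v y = - int k \<and> \<not> conic_has_point T y}
              = 1/2 * measure mu {y. y \<noteq> 0 \<and> v y = - int k} \<and>
            1/2 * measure mu {y. y \<noteq> 0 \<and> v y = - int k}
              = 1/2 * (2::real) ^ (k * degree w) * (1 - 1 / 2 ^ degree w))
       \<and> measure mu {y. y \<noteq> 0 \<and> v y = - 1 \<and> conic_has_point T y} = (2::real) ^ (degree w - 1) - 1"
proof -
  interpret F2t_completion w T v
    using assms(1-4) by unfold_locales
  interpret conic_setting v "f2_eval w T" residues T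
    by (rule conic_setting)
  interpret conic_measure v "f2_eval w T" residues T mu
    using assms(5) by unfold_locales
  have card: "real (card residues) = 2 ^ degree w"
    using card_residues by simp
  show ?thesis
  proof (intro conjI allI impI)
    fix k :: nat
    assume "1 < k"
    let ?S = "{y. y \<noteq> 0 \<and> v y = - int k}"
    let ?A0 = "{y. y \<noteq> 0 \<and> v y = - int k \<and> conic_has_point T y}"
    let ?A1 = "{y. y \<noteq> 0 \<and> v y = - int k \<and> \<not> conic_has_point T y}"
    show "measure mu ?A0 = measure mu ?A1" "measure mu ?A1 = 1/2 * measure mu ?S"
      using measure_conic_shell_half[of k] \<open>1 < k\<close> by simp_all
    have "(2::real) ^ (k * degree w) = (2 ^ degree w) ^ k"
      by (simp add: power_mult[symmetric] mult.commute)
    then show "1/2 * measure mu ?S = 1/2 * 2 ^ (k * degree w) * (1 - 1 / 2 ^ degree w)"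
      using measure_shell[of k] power_diff_power_pred[of k "2 ^ degree w :: real"] card \<open>1 < k\<close> by simp
  next
    have "(2::real) ^ degree w = 2 * 2 ^ (degree w - 1)"
      using degree_w_pos by (simp add: power_eq_if)
    then show "measure mu {y. y \<noteq> 0 \<and> v y = - 1 \<and> conic_has_point T y} = 2 ^ (degree w - 1) - 1"
      using measure_conic_shell_1 card by simp
  qed
qed

end
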